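(* For all $\mathbf U,\mathbf V\in\mathcal E([0,T];\mathcal A_X^{\otimes2})$, $$\varphi\big(\delta^X(\mathbf U)\,\delta^X(\mathbf V)^*\big)=(\varphi\times\varphi)\big(\langle\mathbf U;\mathbf V^*\rangle_{\mathcal H}\big)+(\varphi\times\varphi\times\varphi)\big(\mathcal T_{\mathcal H}(\mathbf U,\mathbf V)\big),$$ where $\mathcal T_{\mathcal H}:\mathcal E([0,T];\mathcal A_X^{\otimes2})^2\to\mathcal A_X^{\otimes3}$ is the bilinear extension of $$\mathcal T_{\mathcal H}(\mathbf Fh,\mathbf Gk):=\langle D^X_1\mathbf F,k\rangle_{\mathcal H}\cdot\langle(D^X_2\mathbf G)^*,h\rangle_{\mathcal H}+\langle D^X_2\mathbf F,k\rangle_{\mathcal H}\cdot\langle(D^X_1\mathbf G)^*,h\rangle_{\mathcal H}$$ for $\mathbf F,\mathbf G\in\mathcal A_X^{\otimes 2}$, $h,k\in\mathcal E([0,T];\mathbb R)$ (the product $\cdot$ being the componentwise product in $\mathcal A_X^{\otimes3}$).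
   Context: NC probability space: a pair $(\mathcal A,\varphi)$ with $\mathcal A$ a unital complex Banach $*$-algebra with $\|XY\|\le\|X\|\|Y\|$, $\|X^*X\|=\|X\|^2$, and $\varphi$ a linear functional with $\varphi(1)=1$, $\varphi(XY)=\varphi(YX)$, $\varphi(X^*X)\ge0$, $\varphi(X^*X)=0\Rightarrow X=0$. For $k\ge2$, $\mathcal A^{\otimes k}$ is the algebraic tensor product with componentwise product $(F_1\otimes\cdots\otimes F_k)\cdot(G_1\otimes\cdots\otimes G_k)=(F_1G_1)\otimes\cdots\otimes(F_kG_k)$, involution $(F_1\otimes\cdots\otimes F_k)^*=F_1^*\otimes\cdots\otimes F_k^*$, and $\varphi^{\times k}(F_1\otimes\cdots\otimes F_k)=\varphi(F_1)\cdots\varphi(F_k)$ (written $\varphi\times\varphi$, $\varphi\times\varphi\times\varphi$), all extended linearly. Also $(F_1\otimes F_2)\sharp G:=F_1GF_2$ and $(\mathrm{Id}\times\varphi\times\mathrm{Id})(F_1\otimes F_2\otimes F_3):=\varphi(F_2)F_1F_3$, extended linearly. A centered semicircular process $\{X_t\}_{t\in[0,T]}$ is a family of self-adjoint elements whose mixed moments satisfy the free Wick formula $\varphi(X_{t_1}\cdots X_{t_r})=\sum_{\pi\in NC_2(r)}\prod_{\{p,q\}\in\pi}\varphi(X_{t_p}X_{t_q})$ for even $r$ ($NC_2(r)$ = non-crossing pairings of $\{1,\dots,r\}$) and vanishing odd moments. Fix $T>0$ and a centered semicircular process $\{X_t\}_{t\in[0,T]}$ in $(\mathcal A,\varphi)$;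 $\mathcal A_X$ is the unital subalgebra generated by $\{X_t\}$. $\mathcal E([0,T];\mathbb R)$ is the space of step functions $h=\sum_i\alpha_i\mathbf 1_{[a_i,b_i)}$, and $X(h):=\sum_i\alpha_i(X_{b_i}-X_{a_i})$. $\mathcal H$ is the completion of $\mathcal E([0,T];\mathbb R)$ for the inner product determined by $\langle\mathbf 1_{[0,s]},\mathbf 1_{[0,t]}\rangle_{\mathcal H}=\varphi(X_sX_t)$. For an algebra $E$, $\mathcal E([0,T];E)$ is the set of finite sums $\sum_i x_ih_i$ with $x_i\in E$, $h_i$ step functions. Pairings: $\langle xh,k\rangle_{\mathcal H}=\langle h,xk\rangle_{\mathcal H}:=x\langle h,k\rangle_{\mathcal H}$ and $\langle xh;yk\rangle_{\mathcal H}:=(x\cdot y)\langle h,k\rangle_{\mathcal H}$, extended bilinearly; for $\mathbf U=\sum_ix_ih_i$, $\mathbf U^*:=\sum_ix_i^*h_i$. $D^X:\mathcal A_X\to\mathcal E([0,T];\mathcal A_X^{\otimes2})$ is the linear map with $D^X1=0$ and $D^X\big(X(h_1)\cdots X(h_m)\big)=\sum_{i=1}^m\big[(X(h_1)\cdots X(h_{i-1}))\otimes(X(h_{i+1})\cdots X(h_m))\big]h_i$ (empty products $=1$). For $F_1,F_2\in\mathcal A_X$, $D^X_1(F_1\otimes F_2):=D^XF_1\otimes F_2$, $D^X_2(F_1\otimes F_2):=F_1\otimes D^XF_2$ (in $\mathcal E([0,T];\mathcal A_X^{\otimes3})$), extended linearly, and $D^X:=D^X_1+D^X_2$. The divergence: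 $\delta^X(\mathbf Fh):=\mathbf F\sharp X(h)-(\mathrm{Id}\times\varphi\times\mathrm{Id})\big(\langle D^X\mathbf F,h\rangle_{\mathcal H}\big)$ for $\mathbf F\in\mathcal A_X^{\otimes2}$, $h$ a step function, extended linearly to $\mathcal E([0,T];\mathcal A_X^{\otimes2})$. *)

theory Defs
  imports "HOL-Analysis.Analysis"
begin

text \<open>A complex unital Banach algebra is modelled as a real unital Banach algebra
  together with a central element ii with ii * ii = -1 giving the complex scalar
  multiplication scaleC; the norm is required to be homogeneous for complex scalars.\<close>

definition scaleC :: "'a::real_algebra_1 \<Rightarrow> complex \<Rightarrow> 'a \<Rightarrow> 'a" where
  "scaleC ii c x = Re c *\<^sub>R x + Im c *\<^sub>R (ii * x)"

definition nc_prob_space ::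
  "'a::{real_normed_algebra_1,banach} \<Rightarrow> ('a \<Rightarrow> 'a) \<Rightarrow> ('a \<Rightarrow> complex) \<Rightarrow> bool" where
  "nc_prob_space ii st \<phi> \<longleftrightarrow>
     (\<forall>x. ii * x = x * ii) \<and> ii * ii = - 1 \<and>
     (\<forall>c x. norm (scaleC ii c x) = cmod c * norm x) \<and>
     (\<forall>x y. st (x + y) = st x + st y) \<and>
     (\<forall>c x. st (scaleC ii c x) = scaleC ii (cnj c) (st x)) \<and>
     (\<forall>x y. st (x * y) = st y * st x) \<and>
     (\<forall>x. st (st x) = x) \<and>
     (\<forall>x. norm (st x * x) = (norm x)^2) \<and>
     (\<forall>x y. \<phi> (x + y) = \<phi> x + \<phi> y) \<and>
     (\<forall>c x. \<phi> (scaleC ii c x) = c * \<phi> x) \<and>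
     \<phi> 1 = 1 \<and>
     (\<forall>x y. \<phi> (x * y) = \<phi> (y * x)) \<and>
     (\<forall>x. \<phi> (st x * x) \<in> \<real> \<and> Re (\<phi> (st x * x)) \<ge> 0) \<and>
     (\<forall>x. \<phi> (st x * x) = 0 \<longrightarrow> x = 0)"

definition nc_pairings :: "nat \<Rightarrow> (nat \<times> nat) set set" where
  "nc_pairings r = {\<pi>.
     (\<forall>pq\<in>\<pi>. fst pq < snd pq \<and> snd pq < r) \<and>
     (\<forall>i<r. \<exists>!pq. pq \<in> \<pi> \<and> (fst pq = i \<or> snd pq = i)) \<and>
     (\<forall>pq1\<in>\<pi>. \<forall>pq2\<in>\<pi>. \<not> (fst pq1 < fst pq2 \<and> fst pq2 < snd pq1 \<and> snd pq1 < snd pq2))}"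

definition semicircular_process ::
  "real \<Rightarrow> ('a::ring_1 \<Rightarrow> 'a) \<Rightarrow> ('a \<Rightarrow> complex) \<Rightarrow> (real \<Rightarrow> 'a) \<Rightarrow> bool" where
  "semicircular_process T st \<phi> X \<longleftrightarrow>
     (\<forall>t\<in>{0..T}. st (X t) = X t) \<and>
     (\<forall>ts. set ts \<subseteq> {0..T} \<longrightarrow>
        \<phi> (prod_list (map X ts)) =
          (if even (length ts)
           then (\<Sum>\<pi>\<in>nc_pairings (length ts). \<Prod>pq\<in>\<pi>. \<phi> (X (ts ! fst pq) * X (ts ! snd pq)))
           else 0))"

text \<open>A step function sum_i alpha_i 1_[a_i,b_i) is represented by the list of
  triples (alpha_i, a_i, b_i).\<close>

type_synonym step = "(real \<times> real \<times> real) list"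

definition valid_step :: "real \<Rightarrow> step \<Rightarrow> bool" where
  "valid_step T h \<longleftrightarrow> (\<forall>(\<alpha>, a, b)\<in>set h. 0 \<le> a \<and> a \<le> b \<and> b \<le> T)"

definition Xh :: "(real \<Rightarrow> 'a::real_vector) \<Rightarrow> step \<Rightarrow> 'a" where
  "Xh X h = sum_list (map (\<lambda>(\<alpha>, a, b). \<alpha> *\<^sub>R (X b - X a)) h)"

text \<open>Inner product of H on step functions: bilinear extension of
  <1_[0,s], 1_[0,t]> = phi(X_s X_t), via 1_[a,b) = 1_[0,b) - 1_[0,a).\<close>

definition innerH :: "('a::times \<Rightarrow> complex) \<Rightarrow> (real \<Rightarrow> 'a) \<Rightarrow> step \<Rightarrow> step \<Rightarrow> complex" where
  "innerH \<phi> X h k =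
     sum_list (map (\<lambda>(\<alpha>, a, b). sum_list (map (\<lambda>(\<beta>, c, d).
        complex_of_real (\<alpha> * \<beta>) *
          (\<phi> (X b * X d) - \<phi> (X b * X c) - \<phi> (X a * X d) + \<phi> (X a * X c))) k)) h)"

text \<open>A word [h_1,...,h_m] stands for the monomial X(h_1)...X(h_m) in A_X.
  Elements of A_X^{\<otimes>2} (resp. A_X^{\<otimes>3}) are represented as finite formal
  linear combinations of tensors of words.\<close>

type_synonym word = "step list"
type_synonym tensor2 = "(complex \<times> word \<times> word) list"
type_synonym tensor3 = "(complex \<times> word \<times> word \<times> word) list"

definition ev :: "(real \<Rightarrow> 'a::real_algebra_1) \<Rightarrow> word \<Rightarrow> 'a" where
  "ev X w = prod_list (map (Xh X) w)"

definition valid_word :: "real \<Rightarrow> word \<Rightarrow> bool" where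
  "valid_word T w \<longleftrightarrow> (\<forall>h\<in>set w. valid_step T h)"

definition valid_E2 :: "real \<Rightarrow> (tensor2 \<times> step) list \<Rightarrow> bool" where
  "valid_E2 T U \<longleftrightarrow> (\<forall>(F, h)\<in>set U. valid_step T h \<and>
      (\<forall>(c, u, v)\<in>set F. valid_word T u \<and> valid_word T v))"

text \<open>Involution: (X(h_1)...X(h_m))^* = X(h_m)...X(h_1) since X(h_i) self-adjoint.\<close>

definition t2star :: "tensor2 \<Rightarrow> tensor2" where
  "t2star F = map (\<lambda>(c, u, v). (cnj c, rev u, rev v)) F"

definition t3star :: "tensor3 \<Rightarrow> tensor3" where
  "t3star F = map (\<lambda>(c, u, v, w). (cnj c, rev u, rev v, rev w)) F"

definition t2mult :: "tensor2 \<Rightarrow> tensor2 \<Rightarrow> tensor2" where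
  "t2mult F G = concat (map (\<lambda>(c, u1, u2). map (\<lambda>(d, v1, v2). (c * d, u1 @ v1, u2 @ v2)) G) F)"

definition t3mult :: "tensor3 \<Rightarrow> tensor3 \<Rightarrow> tensor3" where
  "t3mult F G = concat (map (\<lambda>(c, u1, u2, u3).
      map (\<lambda>(d, v1, v2, v3). (c * d, u1 @ v1, u2 @ v2, u3 @ v3)) G) F)"

definition phi2 :: "('a::real_algebra_1 \<Rightarrow> complex) \<Rightarrow> (real \<Rightarrow> 'a) \<Rightarrow> tensor2 \<Rightarrow> complex" where
  "phi2 \<phi> X F = sum_list (map (\<lambda>(c, u, v). c * \<phi> (ev X u) * \<phi> (ev X v)) F)"

definition phi3 :: "('a::real_algebra_1 \<Rightarrow> complex) \<Rightarrow> (real \<Rightarrow> 'a) \<Rightarrow> tensor3 \<Rightarrow> complex" where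
  "phi3 \<phi> X F = sum_list (map (\<lambda>(c, u, v, w). c * \<phi> (ev X u) * \<phi> (ev X v) * \<phi> (ev X w)) F)"

text \<open>An element sum_i x_i h_i of E([0,T];E) is the list of pairs (x_i, h_i).\<close>

definition Estar2 :: "(tensor2 \<times> step) list \<Rightarrow> (tensor2 \<times> step) list" where
  "Estar2 U = map (\<lambda>(F, h). (t2star F, h)) U"

definition Estar3 :: "(tensor3 \<times> step) list \<Rightarrow> (tensor3 \<times> step) list" where
  "Estar3 U = map (\<lambda>(F, h). (t3star F, h)) U"

definition tscale :: "complex \<Rightarrow> (complex \<times> 'w) list \<Rightarrow> (complex \<times> 'w) list" where
  "tscale c F = map (\<lambda>(d, w). (c * d, w)) F"

definition pairH :: "('a::times \<Rightarrow> complex) \<Rightarrow> (real \<Rightarrow> 'a) \<Rightarrow>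
    ((complex \<times> 'w) list \<times> step) list \<Rightarrow> step \<Rightarrow> (complex \<times> 'w) list" where
  "pairH \<phi> X U k = concat (map (\<lambda>(F, h). tscale (innerH \<phi> X h k) F) U)"

definition pairHH :: "('a::times \<Rightarrow> complex) \<Rightarrow> (real \<Rightarrow> 'a) \<Rightarrow>
    (tensor2 \<times> step) list \<Rightarrow> (tensor2 \<times> step) list \<Rightarrow> tensor2" where
  "pairHH \<phi> X U V = concat (map (\<lambda>(F, h). concat (map (\<lambda>(G, k).
      tscale (innerH \<phi> X h k) (t2mult F G)) V)) U)"

definition DXw :: "word \<Rightarrow> (tensor2 \<times> step) list" where
  "DXw w = map (\<lambda>i. ([(1, take i w, drop (Suc i) w)], w ! i)) [0..<length w]"

definition D1 :: "tensor2 \<Rightarrow> (tensor3 \<times> step) list" where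
  "D1 F = concat (map (\<lambda>(c, u, v).
      map (\<lambda>(G, h). (map (\<lambda>(d, u1, u2). (c * d, u1, u2, v)) G, h)) (DXw u)) F)"

definition D2 :: "tensor2 \<Rightarrow> (tensor3 \<times> step) list" where
  "D2 F = concat (map (\<lambda>(c, u, v).
      map (\<lambda>(G, h). (map (\<lambda>(d, v1, v2). (c * d, u, v1, v2)) G, h)) (DXw v)) F)"

definition DX2 :: "tensor2 \<Rightarrow> (tensor3 \<times> step) list" where
  "DX2 F = D1 F @ D2 F"

definition sharp :: "'a::real_algebra_1 \<Rightarrow> (real \<Rightarrow> 'a) \<Rightarrow> tensor2 \<Rightarrow> 'a \<Rightarrow> 'a" where
  "sharp ii X F g = sum_list (map (\<lambda>(c, u, v). scaleC ii c (ev X u * g * ev X v)) F)"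

definition idphiid :: "'a::real_algebra_1 \<Rightarrow> ('a \<Rightarrow> complex) \<Rightarrow> (real \<Rightarrow> 'a) \<Rightarrow> tensor3 \<Rightarrow> 'a" where
  "idphiid ii \<phi> X F = sum_list (map (\<lambda>(c, u1, u2, u3).
      scaleC ii (c * \<phi> (ev X u2)) (ev X u1 * ev X u3)) F)"

definition deltaX :: "'a::real_algebra_1 \<Rightarrow> ('a \<Rightarrow> complex) \<Rightarrow> (real \<Rightarrow> 'a) \<Rightarrow>
    (tensor2 \<times> step) list \<Rightarrow> 'a" where
  "deltaX ii \<phi> X U = sum_list (map (\<lambda>(F, h).
      sharp ii X F (Xh X h) - idphiid ii \<phi> X (pairH \<phi> X (DX2 F) h)) U)"

definition TH :: "('a::times \<Rightarrow> complex) \<Rightarrow> (real \<Rightarrow> 'a) \<Rightarrow>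
    (tensor2 \<times> step) list \<Rightarrow> (tensor2 \<times> step) list \<Rightarrow> tensor3" where
  "TH \<phi> X U V = concat (map (\<lambda>(F, h). concat (map (\<lambda>(G, k).
      t3mult (pairH \<phi> X (D1 F) k) (pairH \<phi> X (Estar3 (D2 G)) h) @
      t3mult (pairH \<phi> X (D2 F) k) (pairH \<phi> X (Estar3 (D1 G)) h)) V)) U)"

end

theory Submission
  imports Defs
begin

(* Splitting the non-crossing pairings in the free Wick formula according to the partner of
   the first point gives the Schwinger-Dyson equation
     phi(x X(w_1)...X(w_n)) = sum over splittings w = a y b of phi(x y) phi(a) phi(b)
   for x and the letters in the span of the process.  Hence phi(delta((u (x) v) h) w) is the
   sum over w = a x b of <h, x> phi(v a) phi(b u).  To pair two divergences delta((u (x) v) h)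
   and delta((r (x) s) k), the word r X(k) s is expanded once more at X(k), using traciality;
   the correction terms of the second divergence cancel all resulting terms except the full
   contraction <h, k> and the two terms in which the contractions of h and k cross, which
   form T_H.  The identity extends bilinearly, and adjoints reverse words. *)

fun splits :: "'x list \<Rightarrow> ('x list \<times> 'x \<times> 'x list) list" where
  "splits [] = []"
| "splits (x # xs) = ([], x, xs) # map (\<lambda>(a, y, b). (x # a, y, b)) (splits xs)"

lemma splits_conv_nth: "splits w = map (\<lambda>i. (take i w, w ! i, drop (Suc i) w)) [0..<length w]"
proof (induction w)
  case (Cons x w)
  have "[0..<length (x # w)] = 0 # map Suc [0..<length w]"
    by (simp add: upt_conv_Cons map_Suc_upt del: upt_Suc)
  then show ?case using Cons by (simp add: comp_def)
qed simp

lemma in_set_splitsD: "(a, x, b) \<in> set (splits w) \<Longrightarrow> w = a @ x # b"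
  by (induction w arbitrary: a) auto

lemma splits_append:
  "splits (p @ q) = map (\<lambda>(a, x, b). (a, x, b @ q)) (splits p) @ map (\<lambda>(a, x, b). (p @ a, x, b)) (splits q)"
  by (induction p) (auto simp: case_prod_beta comp_def)

lemma splits_map: "splits (map f w) = map (\<lambda>(a, x, b). (map f a, f x, map f b)) (splits w)"
  by (induction w) (auto simp: case_prod_beta comp_def)

lemma splits_rev: "splits (rev w) = rev (map (\<lambda>(a, x, b). (rev b, x, rev a)) (splits w))"
  by (induction w) (auto simp: splits_append split_def comp_def rev_map)

lemma sum_list_swap:
  "(\<Sum>x\<leftarrow>xs. \<Sum>y\<leftarrow>ys. f x y) = (\<Sum>y\<leftarrow>ys. \<Sum>x\<leftarrow>xs. (f x y :: 'b::comm_monoid_add))"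
  by (induction xs) (auto simp: sum_list_addf)

definition sum_splits :: "'x list \<Rightarrow> ('x list \<Rightarrow> 'x \<Rightarrow> 'x list \<Rightarrow> 'c::comm_monoid_add) \<Rightarrow> 'c" where
  "sum_splits w f = (\<Sum>(a, x, b)\<leftarrow>splits w. f a x b)"

lemma sum_splits_Nil [simp]: "sum_splits [] f = 0"
  by (simp add: sum_splits_def)

lemma sum_splits_zero [simp]: "sum_splits w (\<lambda>a x b. 0) = 0"
  by (simp add: sum_splits_def split_def)

lemma sum_splits_Cons: "sum_splits (x # w) f = f [] x w + sum_splits w (\<lambda>a y b. f (x # a) y b)"
  by (simp add: sum_splits_def split_def comp_def)

lemma sum_splits_append:
  "sum_splits (p @ q) f = sum_splits p (\<lambda>a x b. f a x (b @ q)) + sum_splits q (\<lambda>a x b. f (p @ a) x b)"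
  by (simp add: sum_splits_def splits_append split_def comp_def)

lemma sum_splits_map: "sum_splits (map g w) f = sum_splits w (\<lambda>a x b. f (map g a) (g x) (map g b))"
  by (simp add: sum_splits_def splits_map split_def comp_def)

lemma sum_splits_rev: "sum_splits (rev w) f = sum_splits w (\<lambda>a x b. f (rev b) x (rev a))"
  by (simp add: sum_splits_def splits_rev split_def comp_def rev_map[symmetric] sum_list_rev)

lemma sum_splits_conv_sum:
  "sum_splits w f = (\<Sum>i<length w. f (take i w) (w ! i) (drop (Suc i) w))"
  by (simp add: sum_splits_def splits_conv_nth comp_def atLeast0LessThan[symmetric]
      sum_set_upt_conv_sum_list_nat[symmetric])

lemma sum_splits_cong:
  "(\<And>a x b. w = a @ x # b \<Longrightarrow> f a x b = g a x b) \<Longrightarrow> sum_splits w f = sum_splits w g"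
  unfolding sum_splits_def
  by (rule arg_cong[where f = sum_list], rule map_cong) (auto dest: in_set_splitsD)

lemma sum_splits_add: "sum_splits w (\<lambda>a x b. f a x b + g a x b) = sum_splits w f + sum_splits w g"
  by (simp add: sum_splits_def split_def sum_list_addf)

lemma sum_splits_mult_left: "(c::'c::semiring_0) * sum_splits w f = sum_splits w (\<lambda>a x b. c * f a x b)"
  by (simp add: sum_splits_def split_def sum_list_const_mult)

lemma sum_splits_mult_right: "sum_splits w f * (c::'c::semiring_0) = sum_splits w (\<lambda>a x b. f a x b * c)"
  by (simp add: sum_splits_def split_def sum_list_mult_const)

lemma sum_splits_swap:
  "sum_splits p (\<lambda>a x b. sum_splits q (\<lambda>a' y b'. f a x b a' y b')) =
   sum_splits q (\<lambda>a' y b'. sum_splits p (\<lambda>a x b. f a x b a' y b'))"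
  unfolding sum_splits_def split_def by (rule sum_list_swap)

lemma sum_splits_sum_list_swap:
  "sum_splits w (\<lambda>a x b. \<Sum>y\<leftarrow>ys. f a x b y) = (\<Sum>y\<leftarrow>ys. sum_splits w (\<lambda>a x b. f a x b y))"
  unfolding sum_splits_def split_def by (rule sum_list_swap)

text \<open>A double splitting \<open>r = a1 @ x # a2 @ y # b\<close> can be enumerated from either marked letter.\<close>

lemma sum_splits_reassoc:
  "sum_splits r (\<lambda>a x b. sum_splits b (\<lambda>b1 y b2. f a x b1 y b2)) =
   sum_splits r (\<lambda>a y b. sum_splits a (\<lambda>a1 x a2. f a1 x a2 y b))"
proof (induction r arbitrary: f)
  case (Cons z r)
  have "sum_splits r (\<lambda>a x b. sum_splits b (\<lambda>b1 y b2. f (z # a) x b1 y b2)) =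
        sum_splits r (\<lambda>a y b. sum_splits a (\<lambda>a1 x a2. f (z # a1) x a2 y b))"
    by (rule Cons.IH)
  then show ?case
    by (simp add: sum_splits_Cons sum_splits_add add.assoc)
qed simp

section \<open>An isometry identity for tracial Schwinger--Dyson moments\<close>

text \<open>\<open>M w\<close> stands for the moment \<open>\<phi>(X(w\<^sub>1)\<cdots>X(w\<^sub>n))\<close> of a word over \<open>P\<close>,
  and \<open>e\<close> for the covariance.\<close>

locale tracial_schwinger_dyson =
  fixes M :: "'l list \<Rightarrow> 'c::comm_ring_1" and e :: "'l \<Rightarrow> 'l \<Rightarrow> 'c" and P :: "'l set"
  assumes trace: "M (a @ b) = M (b @ a)"
    and schwinger_dyson: "x \<in> P \<Longrightarrow> set w \<subseteq> P \<Longrightarrow> M (x # w) = sum_splits w (\<lambda>a y b. e x y * M a * M b)"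
    and e_sym: "e x y = e y x"
begin

lemma schwinger_dyson_rotate:
  "k \<in> P \<Longrightarrow> set p \<subseteq> P \<Longrightarrow> set q \<subseteq> P \<Longrightarrow>
    M (p @ k # q) = sum_splits (q @ p) (\<lambda>a y b. e k y * M a * M b)"
  using trace[of p "k # q"] schwinger_dyson[of k "q @ p"] by simp

text \<open>\<open>div_moment u h v w\<close> is the value of \<open>\<phi>(\<delta>((u \<otimes> v) h) \<cdot> w)\<close> predicted by the
  duality between divergence and derivative.\<close>

definition div_moment :: "'l list \<Rightarrow> 'l \<Rightarrow> 'l list \<Rightarrow> 'l list \<Rightarrow> 'c" where
  "div_moment u h v w = sum_splits w (\<lambda>a x b. e h x * M (v @ a) * M (b @ u))"

lemma div_moment_insert:
  assumes "set u \<subseteq> P" "set v \<subseteq> P" "set r \<subseteq> P" "set s \<subseteq> P" "k \<in> P"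
  shows "div_moment u h v (r @ k # s) = e h k * M (v @ r) * M (s @ u)
    + sum_splits r (\<lambda>a x b. sum_splits s (\<lambda>s1 y s2. e h x * M (v @ a) * e k y * M s1 * M (s2 @ u @ b)))
    + sum_splits r (\<lambda>a x b. sum_splits u (\<lambda>u1 y u2. e h x * M (v @ a) * e k y * M (s @ u1) * M (u2 @ b)))
    + sum_splits r (\<lambda>a x b. sum_splits b (\<lambda>b1 y b2. e h x * M (v @ a) * e k y * M (s @ u @ b1) * M b2))
    + sum_splits s (\<lambda>a x b. sum_splits a (\<lambda>a1 y a2. e h x * M (b @ u) * e k y * M a1 * M (a2 @ v @ r)))
    + sum_splits s (\<lambda>a x b. sum_splits v (\<lambda>v1 y v2. e h x * M (b @ u) * e k y * M (a @ v1) * M (v2 @ r)))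
    + sum_splits s (\<lambda>a x b. sum_splits r (\<lambda>r1 y r2. e h x * M (b @ u) * e k y * M (a @ v @ r1) * M r2))"
proof -
  have expand_left: "M (b @ k # s @ u) = sum_splits s (\<lambda>s1 y s2. e k y * M s1 * M (s2 @ u @ b))
      + sum_splits u (\<lambda>u1 y u2. e k y * M (s @ u1) * M (u2 @ b))
      + sum_splits b (\<lambda>b1 y b2. e k y * M (s @ u @ b1) * M b2)" if "set b \<subseteq> P" for b
    using assms that schwinger_dyson_rotate[of k b "s @ u"] by (simp add: sum_splits_append)
  have expand_right: "M (v @ r @ k # a) = sum_splits a (\<lambda>a1 y a2. e k y * M a1 * M (a2 @ v @ r))
      + sum_splits v (\<lambda>v1 y v2. e k y * M (a @ v1) * M (v2 @ r))
      + sum_splits r (\<lambda>r1 y r2. e k y * M (a @ v @ r1) * M r2)" if "set a \<subseteq> P" for a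
    using assms that schwinger_dyson_rotate[of k "v @ r" a] by (simp add: sum_splits_append)
  have left: "sum_splits r (\<lambda>a x b. e h x * M (v @ a) * M (b @ k # s @ u)) =
      sum_splits r (\<lambda>a x b. sum_splits s (\<lambda>s1 y s2. e h x * M (v @ a) * e k y * M s1 * M (s2 @ u @ b)))
    + sum_splits r (\<lambda>a x b. sum_splits u (\<lambda>u1 y u2. e h x * M (v @ a) * e k y * M (s @ u1) * M (u2 @ b)))
    + sum_splits r (\<lambda>a x b. sum_splits b (\<lambda>b1 y b2. e h x * M (v @ a) * e k y * M (s @ u @ b1) * M b2))"
    unfolding sum_splits_add[symmetric]
    by (rule sum_splits_cong)
      (use assms in \<open>simp add: expand_left sum_splits_mult_left distrib_left mult.assoc\<close>)
  have right: "sum_splits s (\<lambda>a x b. e h x * M (v @ r @ k # a) * M (b @ u)) =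
      sum_splits s (\<lambda>a x b. sum_splits a (\<lambda>a1 y a2. e h x * M (b @ u) * e k y * M a1 * M (a2 @ v @ r)))
    + sum_splits s (\<lambda>a x b. sum_splits v (\<lambda>v1 y v2. e h x * M (b @ u) * e k y * M (a @ v1) * M (v2 @ r)))
    + sum_splits s (\<lambda>a x b. sum_splits r (\<lambda>r1 y r2. e h x * M (b @ u) * e k y * M (a @ v @ r1) * M r2))"
    unfolding sum_splits_add[symmetric]
    by (rule sum_splits_cong)
      (use assms in \<open>simp add: expand_right sum_splits_mult_left sum_splits_mult_right
          distrib_left distrib_right mult_ac\<close>)
  have "div_moment u h v (r @ k # s) = sum_splits r (\<lambda>a x b. e h x * M (v @ a) * M (b @ k # s @ u))
      + e h k * M (v @ r) * M (s @ u) + sum_splits s (\<lambda>a x b. e h x * M (v @ r @ k # a) * M (b @ u))"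
    by (simp add: div_moment_def sum_splits_append sum_splits_Cons)
  then show ?thesis
    unfolding left right by (simp add: algebra_simps)
qed

text \<open>The correction terms cancel every term of \<open>div_moment_insert\<close> except the full
  contraction \<open>e h k\<close> and the two terms in which the contractions cross.\<close>

theorem div_moment_isometry:
  assumes "set u \<subseteq> P" "set v \<subseteq> P" "set r \<subseteq> P" "set s \<subseteq> P" "k \<in> P"
  shows "div_moment u h v (r @ k # s)
      - sum_splits r (\<lambda>a x b. e x k * M b * div_moment u h v (a @ s))
      - sum_splits s (\<lambda>a x b. e x k * M a * div_moment u h v (r @ b))
    = e h k * M (u @ s) * M (v @ r)
      + sum_splits u (\<lambda>a x b. sum_splits r (\<lambda>a' y b'. e x k * e y h * M (a @ s) * M (b @ b') * M (v @ a')))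
      + sum_splits v (\<lambda>a x b. sum_splits s (\<lambda>a' y b'. e x k * e y h * M (u @ b') * M (a @ a') * M (b @ r)))"
proof -
  have B1: "sum_splits r (\<lambda>a x b. e x k * M b * div_moment u h v (a @ s)) =
      sum_splits r (\<lambda>a y b. sum_splits a (\<lambda>a1 x a2. e y k * M b * (e h x * M (v @ a1) * M (a2 @ s @ u))))
    + sum_splits r (\<lambda>a y b. sum_splits s (\<lambda>s1 x s2. e y k * M b * (e h x * M (v @ a @ s1) * M (s2 @ u))))"
    by (simp add: div_moment_def sum_splits_append sum_splits_mult_left distrib_left sum_splits_add)
  have B2: "sum_splits s (\<lambda>a x b. e x k * M a * div_moment u h v (r @ b)) =
      sum_splits s (\<lambda>a y b. sum_splits r (\<lambda>r1 x r2. e y k * M a * (e h x * M (v @ r1) * M (r2 @ b @ u))))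
    + sum_splits s (\<lambda>a y b. sum_splits b (\<lambda>b1 x b2. e y k * M a * (e h x * M (v @ r @ b1) * M (b2 @ u))))"
    by (simp add: div_moment_def sum_splits_append sum_splits_mult_left distrib_left sum_splits_add)
  have c1: "sum_splits r (\<lambda>a x b. sum_splits b (\<lambda>b1 y b2. e h x * M (v @ a) * e k y * M (s @ u @ b1) * M b2))
      = sum_splits r (\<lambda>a y b. sum_splits a (\<lambda>a1 x a2. e y k * M b * (e h x * M (v @ a1) * M (a2 @ s @ u))))"
    by (subst sum_splits_reassoc) (use trace[of "s @ u"] in \<open>simp add: e_sym[of k] mult_ac\<close>)
  have c2: "sum_splits s (\<lambda>a x b. sum_splits r (\<lambda>r1 y r2. e h x * M (b @ u) * e k y * M (a @ v @ r1) * M r2))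
      = sum_splits r (\<lambda>a y b. sum_splits s (\<lambda>s1 x s2. e y k * M b * (e h x * M (v @ a @ s1) * M (s2 @ u))))"
    by (subst sum_splits_swap) (use trace[of _ "v @ _"] in \<open>simp add: e_sym[of k] mult_ac\<close>)
  have c3: "sum_splits r (\<lambda>a x b. sum_splits s (\<lambda>s1 y s2. e h x * M (v @ a) * e k y * M s1 * M (s2 @ u @ b)))
      = sum_splits s (\<lambda>a y b. sum_splits r (\<lambda>r1 x r2. e y k * M a * (e h x * M (v @ r1) * M (r2 @ b @ u))))"
    by (subst sum_splits_swap) (use trace[of "_ @ u" _] in \<open>simp add: e_sym[of k] mult_ac\<close>)
  have c4: "sum_splits s (\<lambda>a x b. sum_splits a (\<lambda>a1 y a2. e h x * M (b @ u) * e k y * M a1 * M (a2 @ v @ r)))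
      = sum_splits s (\<lambda>a y b. sum_splits b (\<lambda>b1 x b2. e y k * M a * (e h x * M (v @ r @ b1) * M (b2 @ u))))"
    by (subst sum_splits_reassoc) (use trace[of _ "v @ r"] in \<open>simp add: e_sym[of k] mult_ac\<close>)
  have m1: "sum_splits r (\<lambda>a x b. sum_splits u (\<lambda>u1 y u2. e h x * M (v @ a) * e k y * M (s @ u1) * M (u2 @ b)))
     = sum_splits u (\<lambda>a x b. sum_splits r (\<lambda>a' y b'. e x k * e y h * M (a @ s) * M (b @ b') * M (v @ a')))"
    by (subst sum_splits_swap) (use trace[of s] in \<open>simp add: e_sym[of k] e_sym[of h] mult_ac\<close>)
  have m2: "sum_splits s (\<lambda>a x b. sum_splits v (\<lambda>v1 y v2. e h x * M (b @ u) * e k y * M (a @ v1) * M (v2 @ r)))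
     = sum_splits v (\<lambda>a x b. sum_splits s (\<lambda>a' y b'. e x k * e y h * M (u @ b') * M (a @ a') * M (b @ r)))"
    by (subst sum_splits_swap) (use trace in \<open>simp add: e_sym[of k] e_sym[of h] mult_ac\<close>)
  show ?thesis
    unfolding div_moment_insert[OF assms] B1 B2 c1 c2 c3 c4 m1 m2 trace[of s u]
    by (simp add: algebra_simps)
qed

end

section \<open>Non-crossing pairings, decomposed by the partner of the first point\<close>

definition pairs_below :: "(nat \<times> nat) set \<Rightarrow> nat \<Rightarrow> bool" where
  "pairs_below \<pi> n \<longleftrightarrow> (\<forall>p q. (p, q) \<in> \<pi> \<longrightarrow> p < q \<and> q < n)"

definition pairs_cover :: "(nat \<times> nat) set \<Rightarrow> nat \<Rightarrow> bool" where
  "pairs_cover \<pi> n \<longleftrightarrow> (\<forall>i<n. \<exists>p q. (p, q) \<in> \<pi> \<and> (p = i \<or> q = i))"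

definition pairs_disjoint :: "(nat \<times> nat) set \<Rightarrow> bool" where
  "pairs_disjoint \<pi> \<longleftrightarrow> (\<forall>p q p' q'. (p, q) \<in> \<pi> \<longrightarrow> (p', q') \<in> \<pi> \<longrightarrow>
      (p = p' \<or> p = q' \<or> q = p' \<or> q = q') \<longrightarrow> p = p' \<and> q = q')"

definition pairs_noncrossing :: "(nat \<times> nat) set \<Rightarrow> bool" where
  "pairs_noncrossing \<pi> \<longleftrightarrow> (\<forall>p q p' q'. (p, q) \<in> \<pi> \<longrightarrow> (p', q') \<in> \<pi> \<longrightarrow> \<not> (p < p' \<and> p' < q \<and> q < q'))"

lemma pairs_belowD: "pairs_below \<pi> n \<Longrightarrow> (p, q) \<in> \<pi> \<Longrightarrow> p < q \<and> q < n"
  unfolding pairs_below_def by blast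

lemma pairs_disjointD:
  "pairs_disjoint \<pi> \<Longrightarrow> (p, q) \<in> \<pi> \<Longrightarrow> (p', q') \<in> \<pi> \<Longrightarrow> p = p' \<or> p = q' \<or> q = p' \<or> q = q' \<Longrightarrow>
    p = p' \<and> q = q'"
  unfolding pairs_disjoint_def by blast

lemma pairs_noncrossingD:
  "pairs_noncrossing \<pi> \<Longrightarrow> (p, q) \<in> \<pi> \<Longrightarrow> (p', q') \<in> \<pi> \<Longrightarrow> \<not> (p < p' \<and> p' < q \<and> q < q')"
  unfolding pairs_noncrossing_def by blast

lemma nc_pairings_iff:
  "\<pi> \<in> nc_pairings n \<longleftrightarrow> pairs_below \<pi> n \<and> pairs_cover \<pi> n \<and> pairs_disjoint \<pi> \<and> pairs_noncrossing \<pi>"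
proof -
  have below: "(\<forall>pq\<in>\<pi>. fst pq < snd pq \<and> snd pq < n) \<longleftrightarrow> pairs_below \<pi> n"
    by (auto simp: pairs_below_def)
  have noncrossing: "(\<forall>pq1\<in>\<pi>. \<forall>pq2\<in>\<pi>. \<not> (fst pq1 < fst pq2 \<and> fst pq2 < snd pq1 \<and> snd pq1 < snd pq2))
      \<longleftrightarrow> pairs_noncrossing \<pi>"
    by (auto simp: pairs_noncrossing_def) (metis fst_conv snd_conv)
  have unique: "(\<forall>i<n. \<exists>!pq. pq \<in> \<pi> \<and> (fst pq = i \<or> snd pq = i)) \<longleftrightarrow> pairs_cover \<pi> n \<and> pairs_disjoint \<pi>"
    if "pairs_below \<pi> n"
  proof
    assume u: "\<forall>i<n. \<exists>!pq. pq \<in> \<pi> \<and> (fst pq = i \<or> snd pq = i)"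
    have "pairs_cover \<pi> n"
      unfolding pairs_cover_def by (metis u prod.collapse)
    moreover have "pairs_disjoint \<pi>"
      unfolding pairs_disjoint_def
      using that u unfolding pairs_below_def by (smt (verit) fst_conv less_trans old.prod.inject snd_conv)
    ultimately show "pairs_cover \<pi> n \<and> pairs_disjoint \<pi>" ..
  next
    assume "pairs_cover \<pi> n \<and> pairs_disjoint \<pi>"
    then show "\<forall>i<n. \<exists>!pq. pq \<in> \<pi> \<and> (fst pq = i \<or> snd pq = i)"
      unfolding pairs_cover_def pairs_disjoint_def by (metis fst_conv snd_conv prod.collapse)
  qed
  show ?thesis
    unfolding nc_pairings_def mem_Collect_eq below noncrossing using unique by blast
qed

lemma nc_pairings_subset_Pow: "nc_pairings n \<subseteq> Pow ({..<n} \<times> {..<n})"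
  by (auto simp: nc_pairings_iff pairs_below_def) (meson less_trans)

lemma finite_nc_pairings: "finite (nc_pairings n)"
  by (rule finite_subset[OF nc_pairings_subset_Pow]) auto

lemma finite_nc_pairing: "\<pi> \<in> nc_pairings n \<Longrightarrow> finite \<pi>"
  using nc_pairings_subset_Pow[of n] by (auto intro: finite_subset)

lemma nc_pairings_odd: "odd n \<Longrightarrow> nc_pairings n = {}"
proof (rule ccontr)
  assume "odd n" "nc_pairings n \<noteq> {}"
  then obtain \<pi> where \<pi>: "\<pi> \<in> nc_pairings n" by blast
  then have A: "pairs_below \<pi> n" "pairs_cover \<pi> n" "pairs_disjoint \<pi>"
    by (auto simp: nc_pairings_iff)
  have "{..<n} = (\<Union>pq\<in>\<pi>. {fst pq, snd pq})"
    using A(1,2) unfolding pairs_below_def pairs_cover_def by fastforce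
  have "card {..<n} = (\<Sum>pq\<in>\<pi>. card {fst pq, snd pq})"
    unfolding \<open>{..<n} = _\<close>
  proof (rule card_UN_disjoint)
    show "\<forall>pq\<in>\<pi>. \<forall>pq'\<in>\<pi>. pq \<noteq> pq' \<longrightarrow> {fst pq, snd pq} \<inter> {fst pq', snd pq'} = {}"
    proof (intro ballI impI)
      fix pq pq' assume pq: "pq \<in> \<pi>" "pq' \<in> \<pi>" "pq \<noteq> pq'"
      obtain a b c d where "pq = (a, b)" "pq' = (c, d)" by (cases pq, cases pq')
      moreover from this pq A(3) have "\<not> (a = c \<or> a = d \<or> b = c \<or> b = d)"
        unfolding pairs_disjoint_def by blast
      ultimately show "{fst pq, snd pq} \<inter> {fst pq', snd pq'} = {}"
        by auto
    qed
  qed (use finite_nc_pairing[OF \<pi>] in auto)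
  also have "\<dots> = (\<Sum>pq\<in>\<pi>. 2)"
  proof (rule sum.cong[OF refl])
    fix pq assume "pq \<in> \<pi>"
    then have "fst pq < snd pq"
      using A(1) unfolding pairs_below_def by (metis prod.collapse)
    then show "card {fst pq, snd pq} = 2" by simp
  qed
  finally show False
    using \<open>odd n\<close> by simp
qed

definition nc_sum :: "nat \<Rightarrow> (nat \<times> nat \<Rightarrow> 'b::comm_ring_1) \<Rightarrow> 'b" where
  "nc_sum n g = (\<Sum>\<pi>\<in>nc_pairings n. \<Prod>pq\<in>\<pi>. g pq)"

lemma nc_sum_cong:
  "(\<And>\<pi> pq. \<pi> \<in> nc_pairings n \<Longrightarrow> pq \<in> \<pi> \<Longrightarrow> g pq = g' pq) \<Longrightarrow> nc_sum n g = nc_sum n g'"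
  unfolding nc_sum_def by (intro sum.cong refl prod.cong) auto

definition shift_pair :: "nat \<Rightarrow> nat \<times> nat \<Rightarrow> nat \<times> nat" where
  "shift_pair d pq = (fst pq + d, snd pq + d)"

definition window :: "nat \<Rightarrow> nat \<Rightarrow> (nat \<times> nat) set \<Rightarrow> (nat \<times> nat) set" where
  "window d n \<pi> = {(p, q). (p + d, q + d) \<in> \<pi> \<and> q < n}"

lemma window_in_nc_pairings:
  assumes \<pi>: "\<pi> \<in> nc_pairings N" and "d + n \<le> N"
    and closed: "\<And>p q. (p, q) \<in> \<pi> \<Longrightarrow> d \<le> p \<and> p < d + n \<or> d \<le> q \<and> q < d + n \<Longrightarrow> d \<le> p \<and> q < d + n"
  shows "window d n \<pi> \<in> nc_pairings n"
proof -
  have A: "pairs_below \<pi> N" "pairs_cover \<pi> N" "pairs_disjoint \<pi>" "pairs_noncrossing \<pi>"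
    using \<pi> by (auto simp: nc_pairings_iff)
  note below = pairs_belowD[OF A(1)]
  have "pairs_cover (window d n \<pi>) n"
    unfolding pairs_cover_def
  proof (intro allI impI)
    fix i assume "i < n"
    then have "i + d < N"
      using \<open>d + n \<le> N\<close> by linarith
    then obtain a b where ab: "(a, b) \<in> \<pi>" "a = i + d \<or> b = i + d"
      using A(2) unfolding pairs_cover_def by blast
    then have "d \<le> a \<and> b < d + n"
      using closed[OF ab(1)] \<open>i < n\<close> by (metis add.commute le_add2 nat_add_left_cancel_less)
    with below[OF ab(1)] have "d \<le> a" "a < b" "b < d + n"
      by auto
    then have "(a - d, b - d) \<in> window d n \<pi>" "a - d = i \<or> b - d = i"
      using ab by (auto simp: window_def)
    then show "\<exists>p q. (p, q) \<in> window d n \<pi> \<and> (p = i \<or> q = i)"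
      by blast
  qed
  moreover have "pairs_below (window d n \<pi>) n"
    by (auto simp: pairs_below_def window_def dest: below)
  moreover have "pairs_disjoint (window d n \<pi>)"
    using A(3) unfolding pairs_disjoint_def window_def by (clarsimp, metis add_right_cancel)
  moreover have "pairs_noncrossing (window d n \<pi>)"
    using A(4) unfolding pairs_noncrossing_def window_def by (clarsimp, metis add_less_cancel_right)
  ultimately show ?thesis
    by (simp add: nc_pairings_iff)
qed

definition glue_pairings :: "nat \<Rightarrow> (nat \<times> nat) set \<Rightarrow> (nat \<times> nat) set \<Rightarrow> (nat \<times> nat) set" where
  "glue_pairings j \<pi>1 \<pi>2 = insert (0, Suc j) (shift_pair 1 ` \<pi>1 \<union> shift_pair (j + 2) ` \<pi>2)"

lemma mem_glue_pairings:
  "(a, b) \<in> glue_pairings j \<pi>1 \<pi>2 \<longleftrightarrow> (a = 0 \<and> b = Suc j)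
     \<or> (\<exists>p q. (p, q) \<in> \<pi>1 \<and> a = p + 1 \<and> b = q + 1)
     \<or> (\<exists>p q. (p, q) \<in> \<pi>2 \<and> a = p + j + 2 \<and> b = q + j + 2)"
  unfolding glue_pairings_def shift_pair_def
  by (auto simp: image_iff) (metis fst_conv snd_conv prod.collapse)+

lemma glue_pairings_in_nc_pairings:
  assumes j: "j < m" and p1: "\<pi>1 \<in> nc_pairings j" and p2: "\<pi>2 \<in> nc_pairings (m - 1 - j)"
  shows "glue_pairings j \<pi>1 \<pi>2 \<in> nc_pairings (Suc m)"
proof -
  have a1: "pairs_below \<pi>1 j" "pairs_cover \<pi>1 j" "pairs_disjoint \<pi>1" "pairs_noncrossing \<pi>1"
    using p1 by (auto simp: nc_pairings_iff)
  have a2: "pairs_below \<pi>2 (m - 1 - j)" "pairs_cover \<pi>2 (m - 1 - j)" "pairs_disjoint \<pi>2" "pairs_noncrossing \<pi>2"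
    using p2 by (auto simp: nc_pairings_iff)
  let ?G = "glue_pairings j \<pi>1 \<pi>2"
  note below1 = pairs_belowD[OF a1(1)] and below2 = pairs_belowD[OF a2(1)]
  have "pairs_below ?G (Suc m)"
    unfolding pairs_below_def mem_glue_pairings using j by (auto dest: below1 below2)
  moreover have "pairs_cover ?G (Suc m)"
    unfolding pairs_cover_def
  proof (intro allI impI)
    fix i assume i: "i < Suc m"
    consider "i = 0" | "i = Suc j" | "1 \<le> i \<and> i \<le> j" | "j + 2 \<le> i" by linarith
    then show "\<exists>p q. (p, q) \<in> ?G \<and> (p = i \<or> q = i)"
    proof cases
      case 3
      then have "i - 1 < j" by linarith
      then obtain p q where pq: "(p, q) \<in> \<pi>1" "p = i - 1 \<or> q = i - 1"
        using a1(2) unfolding pairs_cover_def by blast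
      then have "(p + 1, q + 1) \<in> ?G" "p + 1 = i \<or> q + 1 = i"
        using 3 unfolding mem_glue_pairings by auto
      then show ?thesis by blast
    next
      case 4
      then have "i - (j + 2) < m - 1 - j" using i by linarith
      then obtain p q where pq: "(p, q) \<in> \<pi>2" "p = i - (j + 2) \<or> q = i - (j + 2)"
        using a2(2) unfolding pairs_cover_def by blast
      then have "(p + j + 2, q + j + 2) \<in> ?G" "p + j + 2 = i \<or> q + j + 2 = i"
        using 4 unfolding mem_glue_pairings by auto
      then show ?thesis by blast
    qed (auto simp: mem_glue_pairings)
  qed
  moreover have "pairs_disjoint ?G"
    unfolding pairs_disjoint_def mem_glue_pairings
    by (intro allI impI, elim disjE exE conjE)
      (auto dest: below1 below2 pairs_disjointD[OF a1(3)] pairs_disjointD[OF a2(3)])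
  moreover have "pairs_noncrossing ?G"
    unfolding pairs_noncrossing_def mem_glue_pairings
    by (intro allI impI, elim disjE exE conjE)
      (auto dest: below1 below2 pairs_noncrossingD[OF a1(4)] pairs_noncrossingD[OF a2(4)])
  ultimately show ?thesis
    by (simp add: nc_pairings_iff)
qed

lemma nc_pairing_blocks:
  assumes p: "\<pi> \<in> nc_pairings (Suc m)" and z: "(0, Suc j) \<in> \<pi>" and ab: "(a, b) \<in> \<pi>"
  shows "(a = 0 \<and> b = Suc j) \<or> (1 \<le> a \<and> a < b \<and> b \<le> j) \<or> (j + 2 \<le> a \<and> a < b \<and> b \<le> m)"
proof -
  have A: "pairs_below \<pi> (Suc m)" "pairs_disjoint \<pi>" "pairs_noncrossing \<pi>"
    using p by (auto simp: nc_pairings_iff)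
  have lt: "a < b" "b < Suc m"
    using A(1) ab unfolding pairs_below_def by blast+
  show ?thesis
  proof (cases "a = 0 \<or> a = Suc j \<or> b = Suc j")
    case True
    then show ?thesis
      using A(2) ab z unfolding pairs_disjoint_def by blast
  next
    case False
    moreover have "\<not> (0 < a \<and> a < Suc j \<and> Suc j < b)"
      using A(3) z ab unfolding pairs_noncrossing_def by blast
    ultimately show ?thesis
      using lt by linarith
  qed
qed

lemma nc_pairing_windows:
  assumes j: "j < m" and \<pi>: "\<pi> \<in> nc_pairings (Suc m)" and z: "(0, Suc j) \<in> \<pi>"
  shows "window 1 j \<pi> \<in> nc_pairings j"
    and "window (j + 2) (m - 1 - j) \<pi> \<in> nc_pairings (m - 1 - j)"
    and "glue_pairings j (window 1 j \<pi>) (window (j + 2) (m - 1 - j) \<pi>) = \<pi>"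
proof -
  note blocks = nc_pairing_blocks[OF \<pi> z]
  show "window 1 j \<pi> \<in> nc_pairings j"
    by (rule window_in_nc_pairings[OF \<pi>]) (use j blocks in fastforce)+
  show "window (j + 2) (m - 1 - j) \<pi> \<in> nc_pairings (m - 1 - j)"
    by (rule window_in_nc_pairings[OF \<pi>]) (use j blocks in fastforce)+
  show "glue_pairings j (window 1 j \<pi>) (window (j + 2) (m - 1 - j) \<pi>) = \<pi>"
  proof (intro set_eqI iffI)
    fix x assume "x \<in> glue_pairings j (window 1 j \<pi>) (window (j + 2) (m - 1 - j) \<pi>)"
    then show "x \<in> \<pi>"
      using z by (cases x) (auto simp: mem_glue_pairings window_def add.assoc)
  next
    fix x assume "x \<in> \<pi>"
    moreover obtain a b where x: "x = (a, b)" by (cases x)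
    ultimately consider "a = 0 \<and> b = Suc j" | "1 \<le> a \<and> a < b \<and> b \<le> j" | "j + 2 \<le> a \<and> a < b \<and> b \<le> m"
      using blocks by blast
    then show "x \<in> glue_pairings j (window 1 j \<pi>) (window (j + 2) (m - 1 - j) \<pi>)"
    proof cases
      case 2
      then show ?thesis
        using \<open>x \<in> \<pi>\<close> unfolding x mem_glue_pairings window_def
        by (intro disjI2 disjI1 exI[of _ "a - 1"] exI[of _ "b - 1"]) auto
    next
      case 3
      then obtain p q where pq: "a = p + (j + 2)" "b = q + (j + 2)"
        by (metis le_add_diff_inverse2 less_imp_le_nat order_le_less_trans)
      then have "(p, q) \<in> window (j + 2) (m - 1 - j) \<pi>"
        using 3 \<open>x \<in> \<pi>\<close> by (auto simp: x window_def)
      then show ?thesis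
        unfolding x mem_glue_pairings using pq by auto
    qed (simp add: x mem_glue_pairings)
  qed
qed

lemma window_glue_pairings:
  assumes "\<pi>1 \<in> nc_pairings j" "\<pi>2 \<in> nc_pairings k"
  shows "window 1 j (glue_pairings j \<pi>1 \<pi>2) = \<pi>1" "window (j + 2) k (glue_pairings j \<pi>1 \<pi>2) = \<pi>2"
proof -
  have below1: "p < q \<and> q < j" if "(p, q) \<in> \<pi>1" for p q
    using assms(1) that unfolding nc_pairings_iff pairs_below_def by blast
  have below2: "p < q \<and> q < k" if "(p, q) \<in> \<pi>2" for p q
    using assms(2) that unfolding nc_pairings_iff pairs_below_def by blast
  show "window 1 j (glue_pairings j \<pi>1 \<pi>2) = \<pi>1"
    by (auto simp: window_def mem_glue_pairings dest: below1)
  show "window (j + 2) k (glue_pairings j \<pi>1 \<pi>2) = \<pi>2"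
    by (auto simp: window_def mem_glue_pairings dest: below1 below2)
qed

lemma prod_glue_pairings:
  assumes p1: "\<pi>1 \<in> nc_pairings j" and p2: "\<pi>2 \<in> nc_pairings k"
  shows "(\<Prod>pq\<in>glue_pairings j \<pi>1 \<pi>2. g pq) =
    g (0, Suc j) * (\<Prod>pq\<in>\<pi>1. g (shift_pair 1 pq)) * (\<Prod>pq\<in>\<pi>2. g (shift_pair (j + 2) pq))"
proof -
  have inj: "inj_on (shift_pair d) A" for d A
    by (auto simp: inj_on_def shift_pair_def prod_eq_iff)
  have "shift_pair 1 ` \<pi>1 \<inter> shift_pair (j + 2) ` \<pi>2 = {}"
    using p1 unfolding nc_pairings_iff pairs_below_def shift_pair_def by fastforce
  moreover have "(0, Suc j) \<notin> shift_pair 1 ` \<pi>1 \<union> shift_pair (j + 2) ` \<pi>2"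
    by (auto simp: shift_pair_def)
  ultimately show ?thesis
    using finite_nc_pairing[OF p1] finite_nc_pairing[OF p2]
    by (simp add: glue_pairings_def prod.union_disjoint prod.reindex[OF inj] mult.assoc)
qed

lemma sum_nc_pairings_with_first_pair:
  assumes j: "j < m"
  shows "(\<Sum>\<pi>\<in>{\<pi> \<in> nc_pairings (Suc m). (0, Suc j) \<in> \<pi>}. \<Prod>pq\<in>\<pi>. g pq) =
    g (0, Suc j) * nc_sum j (\<lambda>pq. g (shift_pair 1 pq)) * nc_sum (m - 1 - j) (\<lambda>pq. g (shift_pair (j + 2) pq))"
proof -
  let ?S = "nc_pairings j \<times> nc_pairings (m - 1 - j)"
  have "(\<Sum>\<pi>\<in>{\<pi> \<in> nc_pairings (Suc m). (0, Suc j) \<in> \<pi>}. \<Prod>pq\<in>\<pi>. g pq) =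
      (\<Sum>(\<pi>1, \<pi>2)\<in>?S. \<Prod>pq\<in>glue_pairings j \<pi>1 \<pi>2. g pq)"
  proof (rule sum.reindex_bij_witness[of _ "\<lambda>\<pi>. (window 1 j \<pi>, window (j + 2) (m - 1 - j) \<pi>)"
        "case_prod (glue_pairings j)", symmetric])
    fix pp assume "pp \<in> ?S"
    then obtain \<pi>1 \<pi>2 where pp: "pp = (\<pi>1, \<pi>2)" "\<pi>1 \<in> nc_pairings j" "\<pi>2 \<in> nc_pairings (m - 1 - j)"
      by blast
    show "(window 1 j (case_prod (glue_pairings j) pp), window (j + 2) (m - 1 - j) (case_prod (glue_pairings j) pp)) = pp"
      using window_glue_pairings[OF pp(2,3)] pp(1) by simp
    show "case_prod (glue_pairings j) pp \<in> {\<pi> \<in> nc_pairings (Suc m). (0, Suc j) \<in> \<pi>}"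
      using glue_pairings_in_nc_pairings[OF j pp(2,3)] pp(1) by (simp add: glue_pairings_def)
  next
    fix \<pi> assume "\<pi> \<in> {\<pi> \<in> nc_pairings (Suc m). (0, Suc j) \<in> \<pi>}"
    then have \<pi>: "\<pi> \<in> nc_pairings (Suc m)" "(0, Suc j) \<in> \<pi>" by auto
    show "case_prod (glue_pairings j) (window 1 j \<pi>, window (j + 2) (m - 1 - j) \<pi>) = \<pi>"
      using nc_pairing_windows(3)[OF j \<pi>] by simp
    show "(window 1 j \<pi>, window (j + 2) (m - 1 - j) \<pi>) \<in> ?S"
      using nc_pairing_windows(1,2)[OF j \<pi>] by simp
  qed (simp add: split_def)
  also have "\<dots> = (\<Sum>(\<pi>1, \<pi>2)\<in>?S. g (0, Suc j) *
      (\<Prod>pq\<in>\<pi>1. g (shift_pair 1 pq)) * (\<Prod>pq\<in>\<pi>2. g (shift_pair (j + 2) pq)))"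
    by (intro sum.cong) (auto simp: prod_glue_pairings)
  also have "\<dots> = g (0, Suc j) * nc_sum j (\<lambda>pq. g (shift_pair 1 pq)) *
      nc_sum (m - 1 - j) (\<lambda>pq. g (shift_pair (j + 2) pq))"
    by (simp add: nc_sum_def sum.cartesian_product[symmetric] sum_distrib_left sum_distrib_right mult.assoc)
      (rule sum.swap)
  finally show ?thesis .
qed

lemma nc_sum_Suc:
  "nc_sum (Suc m) g = (\<Sum>j<m. g (0, Suc j) * nc_sum j (\<lambda>pq. g (shift_pair 1 pq)) *
      nc_sum (m - 1 - j) (\<lambda>pq. g (shift_pair (j + 2) pq)))"
proof -
  define C where "C j = {\<pi> \<in> nc_pairings (Suc m). (0, Suc j) \<in> \<pi>}" for j
  have partition: "nc_pairings (Suc m) = (\<Union>j<m. C j)"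
  proof (intro set_eqI iffI)
    fix \<pi> assume \<pi>: "\<pi> \<in> nc_pairings (Suc m)"
    then have "pairs_below \<pi> (Suc m)" "pairs_cover \<pi> (Suc m)"
      by (auto simp: nc_pairings_iff)
    then obtain q where "(0, q) \<in> \<pi>" "0 < q" "q < Suc m"
      unfolding pairs_below_def pairs_cover_def by (metis not_less_zero zero_less_Suc)
    then show "\<pi> \<in> (\<Union>j<m. C j)"
      using \<pi> by (auto simp: C_def intro!: bexI[of _ "q - 1"])
  qed (auto simp: C_def)
  have disjoint: "C i \<inter> C j = {}" if "i \<noteq> j" for i j
    using that by (auto simp: C_def nc_pairings_iff pairs_disjoint_def)
  have "nc_sum (Suc m) g = (\<Sum>j<m. \<Sum>\<pi>\<in>C j. \<Prod>pq\<in>\<pi>. g pq)"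
    unfolding nc_sum_def partition
    by (rule sum.UNION_disjoint) (use finite_nc_pairings disjoint in \<open>auto simp: C_def\<close>)
  then show ?thesis
    by (simp add: C_def sum_nc_pairings_with_first_pair)
qed

lemma scaleC_of_real: "scaleC ii (complex_of_real r) x = r *\<^sub>R x"
  by (simp add: scaleC_def)

lemma scaleC_add_right: "scaleC ii c (x + y) = scaleC ii c x + scaleC ii c y"
  by (simp add: scaleC_def algebra_simps)

lemma scaleC_diff_right: "scaleC ii c (x - y) = scaleC ii c x - scaleC ii c y"
  by (simp add: scaleC_def algebra_simps)

lemma scaleC_mult_left: "scaleC ii c x * y = scaleC ii c (x * y)"
  by (simp add: scaleC_def algebra_simps)

lemma scaleC_zero_right [simp]: "scaleC ii c 0 = 0"
  by (simp add: scaleC_def)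

lemma scaleC_sum_list: "scaleC ii c (\<Sum>x\<leftarrow>xs. f x) = (\<Sum>x\<leftarrow>xs. scaleC ii c (f x))"
  by (induction xs) (simp_all add: scaleC_add_right)

locale nc_semicircular =
  fixes ii :: "'a::{real_normed_algebra_1,banach}" and st :: "'a \<Rightarrow> 'a" and \<phi> :: "'a \<Rightarrow> complex"
    and X :: "real \<Rightarrow> 'a" and T :: real
  assumes nc_prob_space: "nc_prob_space ii st \<phi>"
    and semicircular: "semicircular_process T st \<phi> X"
begin

lemma ii_commute: "ii * x = x * ii"
  using nc_prob_space unfolding nc_prob_space_def by (elim conjE) blast

lemma ii_square: "ii * ii = -1"
  using nc_prob_space unfolding nc_prob_space_def by (elim conjE) blast

lemma st_add: "st (x + y) = st x + st y"
  using nc_prob_space unfolding nc_prob_space_def by (elim conjE) blast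

lemma st_scaleC: "st (scaleC ii c x) = scaleC ii (cnj c) (st x)"
  using nc_prob_space unfolding nc_prob_space_def by (elim conjE) blast

lemma st_mult: "st (x * y) = st y * st x"
  using nc_prob_space unfolding nc_prob_space_def by (elim conjE) blast

lemma st_st: "st (st x) = x"
  using nc_prob_space unfolding nc_prob_space_def by (elim conjE) blast

lemma phi_add: "\<phi> (x + y) = \<phi> x + \<phi> y"
  using nc_prob_space unfolding nc_prob_space_def by (elim conjE) blast

lemma phi_scaleC: "\<phi> (scaleC ii c x) = c * \<phi> x"
  using nc_prob_space unfolding nc_prob_space_def by (elim conjE) blast

lemma phi_one: "\<phi> 1 = 1"
  using nc_prob_space unfolding nc_prob_space_def by (elim conjE) blast

lemma phi_commute: "\<phi> (x * y) = \<phi> (y * x)"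
  using nc_prob_space unfolding nc_prob_space_def by (elim conjE) blast

lemma phi_st_mult_self_real: "\<phi> (st x * x) \<in> \<real>"
  using nc_prob_space unfolding nc_prob_space_def by (elim conjE) blast

lemma X_self_adjoint: "t \<in> {0..T} \<Longrightarrow> st (X t) = X t"
  using semicircular unfolding semicircular_process_def by (elim conjE) blast

lemma free_wick:
  "set ts \<subseteq> {0..T} \<Longrightarrow> \<phi> (prod_list (map X ts)) = (if even (length ts)
     then \<Sum>\<pi>\<in>nc_pairings (length ts). \<Prod>pq\<in>\<pi>. \<phi> (X (ts ! fst pq) * X (ts ! snd pq)) else 0)"
  using semicircular unfolding semicircular_process_def by (elim conjE) blast

lemma phi_scaleR: "\<phi> (r *\<^sub>R x) = complex_of_real r * \<phi> x"
  using phi_scaleC[of "complex_of_real r" x] by (simp add: scaleC_of_real)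

lemma phi_minus: "\<phi> (- x) = - \<phi> x"
  using phi_scaleR[of "-1" x] by simp

lemma phi_diff: "\<phi> (x - y) = \<phi> x - \<phi> y"
  using phi_add[of x "- y"] by (simp add: phi_minus)

lemma phi_zero [simp]: "\<phi> 0 = 0"
  using phi_add[of 0 0] by simp

lemma phi_sum_list: "\<phi> (\<Sum>x\<leftarrow>xs. f x) = (\<Sum>x\<leftarrow>xs. \<phi> (f x))"
  by (induction xs) (simp_all add: phi_add)

lemma st_scaleR: "st (r *\<^sub>R x) = r *\<^sub>R st x"
  using st_scaleC[of "complex_of_real r" x] by (simp add: scaleC_of_real)

lemma st_diff: "st (x - y) = st x - st y"
  using st_add[of x "- y"] st_scaleR[of "-1" y] by simp

lemma st_zero [simp]: "st 0 = 0"
  using st_add[of 0 0] by simp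

lemma st_sum_list: "st (\<Sum>x\<leftarrow>xs. f x) = (\<Sum>x\<leftarrow>xs. st (f x))"
  by (induction xs) (simp_all add: st_add)

lemma st_one: "st 1 = 1"
  using st_mult[of "st 1" 1] by (simp add: st_st)

lemma scaleC_mult_right: "x * scaleC ii c y = scaleC ii c (x * y)"
proof -
  have "x * (ii * y) = ii * (x * y)"
    by (metis ii_commute mult.assoc)
  then show ?thesis
    by (simp add: scaleC_def distrib_left)
qed

lemma scaleC_scaleC: "scaleC ii c (scaleC ii d x) = scaleC ii (c * d) x"
proof -
  have "ii * (ii * x) = - x"
    by (metis ii_square mult.assoc mult_minus1)
  then show ?thesis
    by (simp add: scaleC_def algebra_simps)
qed

lemma st_ii: "st ii = - ii"
  using st_scaleC[of \<i> 1] by (simp add: scaleC_def st_one)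

text \<open>Positivity makes \<open>\<phi>\<close> hermitian: \<open>\<phi>(y) + \<phi>(y\<^sup>*)\<close> is real since it is a difference of
  values of \<open>\<phi>\<close> at \<open>(1 + y)\<^sup>*(1 + y)\<close>, \<open>y\<^sup>* y\<close> and \<open>1\<close>; apply this to \<open>x\<close> and \<open>ii x\<close>.\<close>

lemma phi_st: "\<phi> (st x) = cnj (\<phi> x)"
proof -
  have real: "\<phi> y + \<phi> (st y) \<in> \<real>" for y
  proof -
    have "st (1 + y) * (1 + y) = 1 + y + st y + st y * y"
      by (simp add: st_add st_one algebra_simps)
    then have "\<phi> y + \<phi> (st y) = \<phi> (st (1 + y) * (1 + y)) - 1 - \<phi> (st y * y)"
      by (simp add: phi_add phi_one)
    then show ?thesis
      using phi_st_mult_self_real by (simp add: Reals_diff)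
  qed
  have "\<phi> (ii * x) = \<i> * \<phi> x" "\<phi> (st (ii * x)) = - \<i> * \<phi> (st x)"
    using phi_scaleC[of \<i> x] phi_scaleC[of "- \<i>" "st x"]
    by (simp_all add: scaleC_def st_mult st_ii ii_commute)
  then have "\<i> * \<phi> x - \<i> * \<phi> (st x) \<in> \<real>"
    using real[of "ii * x"] by simp
  with real[of x] show ?thesis
    by (simp add: complex_is_Real_iff complex_eq_iff)
qed

end

section \<open>The Schwinger--Dyson equation for the semicircular process\<close>

context nc_semicircular
begin

lemma phi_prod_list_X:
  "set ts \<subseteq> {0..T} \<Longrightarrow> \<phi> (prod_list (map X ts)) = nc_sum (length ts) (\<lambda>pq. \<phi> (X (ts ! fst pq) * X (ts ! snd pq)))"
  by (cases "even (length ts)") (simp_all add: free_wick nc_sum_def nc_pairings_odd)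

lemma nc_sum_shift_nth:
  assumes "d + n \<le> length ts"
  shows "nc_sum n (\<lambda>pq. \<phi> (X (ts ! fst (shift_pair d pq)) * X (ts ! snd (shift_pair d pq)))) =
    nc_sum n (\<lambda>pq. \<phi> (X (take n (drop d ts) ! fst pq) * X (take n (drop d ts) ! snd pq)))"
proof (rule nc_sum_cong)
  fix \<pi> pq assume "\<pi> \<in> nc_pairings n" "pq \<in> \<pi>"
  then have "fst pq < snd pq" "snd pq < n"
    unfolding nc_pairings_iff pairs_below_def by (metis prod.collapse)+
  then show "\<phi> (X (ts ! fst (shift_pair d pq)) * X (ts ! snd (shift_pair d pq))) =
      \<phi> (X (take n (drop d ts) ! fst pq) * X (take n (drop d ts) ! snd pq))"
    using assms by (simp add: shift_pair_def add.commute)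
qed

lemma phi_X_mult_prod_list:
  assumes t: "t \<in> {0..T}" and ts: "set ts \<subseteq> {0..T}"
  shows "\<phi> (X t * prod_list (map X ts)) =
    sum_splits (map X ts) (\<lambda>a y b. \<phi> (X t * y) * \<phi> (prod_list a) * \<phi> (prod_list b))"
proof -
  define m where "m = length ts"
  have sub: "set (take n (drop d ts)) \<subseteq> {0..T}" for n d
    using ts by (meson order_trans set_drop_subset set_take_subset)
  have "\<phi> (X t * prod_list (map X ts)) =
      nc_sum (Suc m) (\<lambda>pq. \<phi> (X ((t # ts) ! fst pq) * X ((t # ts) ! snd pq)))"
    using phi_prod_list_X[of "t # ts"] t ts by (simp add: m_def)
  also have "\<dots> = (\<Sum>j<m. \<phi> (X t * X (ts ! j)) * \<phi> (prod_list (map X (take j ts))) *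
      \<phi> (prod_list (map X (drop (Suc j) ts))))"
    unfolding nc_sum_Suc
  proof (rule sum.cong[OF refl])
    fix j assume "j \<in> {..<m}"
    then have j: "j < m" by simp
    have "nc_sum j (\<lambda>pq. \<phi> (X ((t # ts) ! fst (shift_pair 1 pq)) * X ((t # ts) ! snd (shift_pair 1 pq))))
        = \<phi> (prod_list (map X (take j ts)))"
      using nc_sum_shift_nth[of 1 j "t # ts"] phi_prod_list_X[OF sub[of j 0]] j by (simp add: m_def)
    moreover have "nc_sum (m - 1 - j) (\<lambda>pq. \<phi> (X ((t # ts) ! fst (shift_pair (j + 2) pq)) *
        X ((t # ts) ! snd (shift_pair (j + 2) pq)))) = \<phi> (prod_list (map X (drop (Suc j) ts)))"
      using nc_sum_shift_nth[of "j + 2" "m - 1 - j" "t # ts"] phi_prod_list_X[OF sub[of "m - 1 - j" "Suc j"]] j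
      by (simp add: m_def)
    ultimately show "\<phi> (X ((t # ts) ! fst (0, Suc j)) * X ((t # ts) ! snd (0, Suc j))) *
        nc_sum j (\<lambda>pq. \<phi> (X ((t # ts) ! fst (shift_pair 1 pq)) * X ((t # ts) ! snd (shift_pair 1 pq)))) *
        nc_sum (m - 1 - j) (\<lambda>pq. \<phi> (X ((t # ts) ! fst (shift_pair (j + 2) pq)) *
          X ((t # ts) ! snd (shift_pair (j + 2) pq)))) =
      \<phi> (X t * X (ts ! j)) * \<phi> (prod_list (map X (take j ts))) * \<phi> (prod_list (map X (drop (Suc j) ts)))"
      by simp
  qed
  also have "\<dots> = sum_splits (map X ts) (\<lambda>a y b. \<phi> (X t * y) * \<phi> (prod_list a) * \<phi> (prod_list b))"
    by (simp add: sum_splits_conv_sum m_def take_map drop_map)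
  finally show ?thesis .
qed


definition schwinger_dyson :: "'a \<Rightarrow> 'a list \<Rightarrow> bool" where
  "schwinger_dyson y zs \<longleftrightarrow>
     \<phi> (y * prod_list zs) = sum_splits zs (\<lambda>a x b. \<phi> (y * x) * \<phi> (prod_list a) * \<phi> (prod_list b))"

lemma schwinger_dyson_zero_mid: "schwinger_dyson y (p @ 0 # s)"
  by (simp add: schwinger_dyson_def sum_splits_append sum_splits_Cons)

lemma schwinger_dyson_linear_mid:
  assumes "schwinger_dyson y (p @ x # s)" "schwinger_dyson y (p @ z # s)"
  shows "schwinger_dyson y (p @ (c *\<^sub>R x + z) # s)"
proof -
  have phi_linear: "\<phi> (A * ((c *\<^sub>R x + z) * B)) = of_real c * \<phi> (A * (x * B)) + \<phi> (A * (z * B))"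
    for A B by (simp add: distrib_left distrib_right phi_add phi_scaleR)
  have rhs: "sum_splits (p @ w # s) (\<lambda>a x b. \<phi> (y * x) * \<phi> (prod_list a) * \<phi> (prod_list b)) =
      sum_splits p (\<lambda>a x b. \<phi> (y * x) * \<phi> (prod_list a) * \<phi> (prod_list b * (w * prod_list s)))
    + \<phi> (y * w) * \<phi> (prod_list p) * \<phi> (prod_list s)
    + sum_splits s (\<lambda>a x b. \<phi> (y * x) * \<phi> (prod_list p * (w * prod_list a)) * \<phi> (prod_list b))" for w
    by (simp add: sum_splits_append sum_splits_Cons add.assoc)
  have "\<phi> (y * prod_list (p @ (c *\<^sub>R x + z) # s)) =
      of_real c * \<phi> (y * prod_list (p @ x # s)) + \<phi> (y * prod_list (p @ z # s))"
    using phi_linear[of "y * prod_list p" "prod_list s"] by (simp add: mult.assoc)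
  moreover have "sum_splits (p @ (c *\<^sub>R x + z) # s) (\<lambda>a x b. \<phi> (y * x) * \<phi> (prod_list a) * \<phi> (prod_list b)) =
      of_real c * sum_splits (p @ x # s) (\<lambda>a x b. \<phi> (y * x) * \<phi> (prod_list a) * \<phi> (prod_list b))
    + sum_splits (p @ z # s) (\<lambda>a x b. \<phi> (y * x) * \<phi> (prod_list a) * \<phi> (prod_list b))"
    unfolding rhs phi_linear phi_linear[of 1, simplified] phi_linear[of _ 1, simplified]
    by (simp add: sum_splits_add sum_splits_mult_left algebra_simps)
  ultimately show ?thesis
    using assms unfolding schwinger_dyson_def by simp
qed

lemma schwinger_dyson_linear_left:
  assumes "schwinger_dyson x zs" "schwinger_dyson z zs"
  shows "schwinger_dyson (c *\<^sub>R x + z) zs"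
  using assms unfolding schwinger_dyson_def
  by (simp add: distrib_left distrib_right phi_add phi_scaleR sum_splits_add sum_splits_mult_left
      algebra_simps)

lemma schwinger_dyson_span:
  assumes y: "y \<in> span (X ` {0..T})" and zs: "zs \<in> lists (span (X ` {0..T}))"
  shows "schwinger_dyson y zs"
proof -
  have X_left: "s \<in> lists (span (X ` {0..T})) \<Longrightarrow> p \<in> lists (X ` {0..T}) \<Longrightarrow> schwinger_dyson (X t) (p @ s)"
    if t: "t \<in> {0..T}" for t p s
  proof (induction s arbitrary: p)
    case Nil
    then obtain ts where "p = map X ts" "ts \<in> lists {0..T}"
      by (auto simp: lists_image)
    then show ?case
      using phi_X_mult_prod_list[OF t, of ts] by (auto simp: schwinger_dyson_def)
  next
    case (Cons z s)
    have "z \<in> span (X ` {0..T})"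
      using Cons.prems by simp
    then show ?case
    proof (induction rule: span_induct_alt)
      case base
      then show ?case by (simp add: schwinger_dyson_zero_mid)
    next
      case (step c x w)
      have "schwinger_dyson (X t) ((p @ [x]) @ s)"
        using Cons.prems step(1) by (intro Cons.IH) auto
      then show ?case
        using schwinger_dyson_linear_mid step(2) by simp
    qed
  qed
  from y show ?thesis
  proof (induction rule: span_induct_alt)
    case base
    then show ?case by (simp add: schwinger_dyson_def sum_splits_def split_def)
  next
    case (step c x w)
    then show ?case
      using X_left[of _ zs "[]"] zs schwinger_dyson_linear_left by auto
  qed
qed

end

lemma ev_Nil [simp]: "ev X [] = 1"
  by (simp add: ev_def)

lemma ev_Cons: "ev X (h # w) = Xh X h * ev X w"
  by (simp add: ev_def)

lemma ev_append: "ev X (u @ v) = ev X u * ev X v"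
  by (simp add: ev_def)

lemma Xh_Nil [simp]: "Xh X [] = 0"
  by (simp add: Xh_def)

lemma Xh_Cons: "Xh X ((\<alpha>, a, b) # h) = \<alpha> *\<^sub>R (X b - X a) + Xh X h"
  by (simp add: Xh_def)

lemma valid_word_append: "valid_word T (u @ v) \<longleftrightarrow> valid_word T u \<and> valid_word T v"
  by (auto simp: valid_word_def)

lemma valid_word_Cons: "valid_word T (h # v) \<longleftrightarrow> valid_step T h \<and> valid_word T v"
  by (auto simp: valid_word_def)

lemma valid_word_rev: "valid_word T (rev v) \<longleftrightarrow> valid_word T v"
  by (auto simp: valid_word_def)

context nc_semicircular
begin

definition mom :: "word \<Rightarrow> complex" where
  "mom w = \<phi> (ev X w)"

definition cov :: "step \<Rightarrow> step \<Rightarrow> complex" where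
  "cov h k = innerH \<phi> X h k"

lemma mom_append_commute: "mom (u @ v) = mom (v @ u)"
  by (simp add: mom_def ev_append phi_commute)

lemma cov_eq_phi: "cov h k = \<phi> (Xh X h * Xh X k)"
proof -
  have increment: "\<phi> ((\<alpha> *\<^sub>R (X b - X a)) * Xh X k) = (\<Sum>(\<beta>, c, d)\<leftarrow>k. complex_of_real (\<alpha> * \<beta>) *
      (\<phi> (X b * X d) - \<phi> (X b * X c) - \<phi> (X a * X d) + \<phi> (X a * X c)))" for \<alpha> a b
  proof (induction k)
    case (Cons t k)
    obtain \<beta> c d where t: "t = (\<beta>, c, d)" by (cases t)
    have "(\<alpha> *\<^sub>R (X b - X a)) * Xh X (t # k) =
        (\<alpha> * \<beta>) *\<^sub>R (X b * X d - X b * X c - X a * X d + X a * X c) + (\<alpha> *\<^sub>R (X b - X a)) * Xh X k"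
      by (simp add: t Xh_Cons algebra_simps)
    then show ?case
      using Cons.IH by (simp add: t phi_add phi_scaleR phi_diff)
  qed simp
  show ?thesis
  proof (induction h)
    case (Cons s h)
    obtain \<alpha> a b where s: "s = (\<alpha>, a, b)" by (cases s)
    show ?case
      using Cons.IH increment[of \<alpha> b a] by (simp add: s cov_def innerH_def Xh_Cons distrib_right phi_add)
  qed (simp add: cov_def innerH_def)
qed

lemma cov_commute: "cov h k = cov k h"
  by (simp add: cov_eq_phi phi_commute)

lemma Xh_self_adjoint: "valid_step T h \<Longrightarrow> st (Xh X h) = Xh X h"
proof (induction h)
  case (Cons s h)
  obtain \<alpha> a b where s: "s = (\<alpha>, a, b)" by (cases s)
  have "a \<in> {0..T}" "b \<in> {0..T}" "valid_step T h"
    using Cons.prems by (auto simp: s valid_step_def)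
  then show ?case
    using Cons.IH by (simp add: s Xh_Cons st_add st_scaleR st_diff X_self_adjoint)
qed simp

lemma st_ev: "valid_word T w \<Longrightarrow> st (ev X w) = ev X (rev w)"
  by (induction w) (simp_all add: st_one valid_word_Cons ev_Cons ev_append st_mult Xh_self_adjoint)

lemma cnj_cov: "valid_step T h \<Longrightarrow> valid_step T k \<Longrightarrow> cnj (cov h k) = cov h k"
  by (simp add: cov_eq_phi phi_st[symmetric] st_mult Xh_self_adjoint phi_commute)

lemma cnj_mom: "valid_word T w \<Longrightarrow> cnj (mom w) = mom (rev w)"
  by (simp add: mom_def phi_st[symmetric] st_ev)

lemma Xh_in_span: "valid_step T h \<Longrightarrow> Xh X h \<in> span (X ` {0..T})"
proof (induction h)
  case (Cons s h)
  obtain \<alpha> a b where s: "s = (\<alpha>, a, b)" by (cases s)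
  have ab: "a \<in> {0..T}" "b \<in> {0..T}" and "valid_step T h"
    using Cons.prems by (auto simp: s valid_step_def)
  have "X b - X a \<in> span (X ` {0..T})"
    by (intro span_diff span_base imageI ab)
  then show ?case
    unfolding s Xh_Cons using Cons.IH \<open>valid_step T h\<close> by (intro span_add span_scale)
qed (simp add: span_zero)

lemma mom_Cons:
  assumes "valid_step T h" "valid_word T w"
  shows "mom (h # w) = sum_splits w (\<lambda>a y b. cov h y * mom a * mom b)"
proof -
  have "schwinger_dyson (Xh X h) (map (Xh X) w)"
    using assms by (intro schwinger_dyson_span) (auto simp: valid_word_def Xh_in_span)
  then show ?thesis
    by (simp add: schwinger_dyson_def mom_def ev_Cons cov_eq_phi sum_splits_map ev_def)
qed

sublocale words: tracial_schwinger_dyson mom cov "{h. valid_step T h}"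
proof
  show "mom (x # w) = sum_splits w (\<lambda>a y b. cov x y * mom a * mom b)"
    if "x \<in> {h. valid_step T h}" "set w \<subseteq> {h. valid_step T h}" for x w
    using that by (intro mom_Cons) (auto simp: valid_word_def)
qed (simp_all add: mom_append_commute cov_commute)

end

context nc_semicircular
begin

text \<open>\<open>div_elem u h v\<close> is \<open>\<delta>((u \<otimes> v) h)\<close> for words \<open>u\<close>, \<open>v\<close>: the derivative of a word
  is the sum over its splittings.\<close>

definition div_elem :: "word \<Rightarrow> step \<Rightarrow> word \<Rightarrow> 'a" where
  "div_elem u h v = ev X u * Xh X h * ev X v
     - sum_splits u (\<lambda>a x b. scaleC ii (cov x h * mom b) (ev X a * ev X v))
     - sum_splits v (\<lambda>a x b. scaleC ii (cov x h * mom a) (ev X u * ev X b))"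

lemma phi_sum_splits: "\<phi> (sum_splits w f) = sum_splits w (\<lambda>a x b. \<phi> (f a x b))"
  by (simp add: sum_splits_def split_def phi_sum_list comp_def)

lemma st_sum_splits: "st (sum_splits w f) = sum_splits w (\<lambda>a x b. st (f a x b))"
  by (simp add: sum_splits_def split_def st_sum_list comp_def)

lemma phi_div_elem_mult_ev:
  assumes "valid_word T u" "valid_step T h" "valid_word T v" "valid_word T w"
  shows "\<phi> (div_elem u h v * ev X w) = words.div_moment u h v w"
proof -
  have "\<phi> (ev X u * Xh X h * ev X v * ev X w) = mom (h # v @ w @ u)"
    unfolding mom_def ev_Cons ev_append
    using phi_commute[of "ev X u" "Xh X h * ev X v * ev X w"] by (simp add: mult.assoc)
  also have "\<dots> = sum_splits (v @ w @ u) (\<lambda>a y b. cov h y * mom a * mom b)"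
    using assms by (intro mom_Cons) (auto simp: valid_word_append)
  also have "\<dots> = sum_splits v (\<lambda>a y b. cov h y * mom a * mom (b @ w @ u))
      + words.div_moment u h v w + sum_splits u (\<lambda>a y b. cov h y * mom (v @ w @ a) * mom b)"
    by (simp add: words.div_moment_def sum_splits_append add.assoc)
  finally have main: "\<phi> (ev X u * Xh X h * ev X v * ev X w) = \<dots>" .
  have left: "\<phi> (sum_splits u (\<lambda>a x b. scaleC ii (cov x h * mom b) (ev X a * ev X v)) * ev X w) =
      sum_splits u (\<lambda>a y b. cov h y * mom (v @ w @ a) * mom b)"
    unfolding sum_splits_mult_right phi_sum_splits scaleC_mult_left phi_scaleC
    using mom_append_commute[of _ "v @ w"]
    by (simp add: mom_def[symmetric] ev_append[symmetric] cov_commute[of _ h] mult_ac)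
  have right: "\<phi> (sum_splits v (\<lambda>a x b. scaleC ii (cov x h * mom a) (ev X u * ev X b)) * ev X w) =
      sum_splits v (\<lambda>a y b. cov h y * mom a * mom (b @ w @ u))"
    unfolding sum_splits_mult_right phi_sum_splits scaleC_mult_left phi_scaleC
    using mom_append_commute[of u] by (simp add: mom_def[symmetric] ev_append[symmetric] cov_commute[of _ h] mult_ac)
  show ?thesis
    unfolding div_elem_def left_diff_distrib phi_diff main left right by simp
qed

lemma phi_div_elem_mult_div_elem:
  assumes u: "valid_word T u" and v: "valid_word T v" and r: "valid_word T r" and s: "valid_word T s"
    and h: "valid_step T h" and k: "valid_step T k"
  shows "\<phi> (div_elem u h v * div_elem r k s) = cov h k * mom (u @ s) * mom (v @ r)
     + sum_splits u (\<lambda>a x b. sum_splits r (\<lambda>a' y b'. cov x k * cov y h * mom (a @ s) * mom (b @ b') * mom (v @ a')))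
     + sum_splits v (\<lambda>a x b. sum_splits s (\<lambda>a' y b'. cov x k * cov y h * mom (u @ b') * mom (a @ a') * mom (b @ r)))"
proof -
  have expand: "div_elem r k s = ev X (r @ k # s)
      - sum_splits r (\<lambda>a x b. scaleC ii (cov x k * mom b) (ev X (a @ s)))
      - sum_splits s (\<lambda>a x b. scaleC ii (cov x k * mom a) (ev X (r @ b)))"
    by (simp add: div_elem_def ev_append ev_Cons mult.assoc)
  have "\<phi> (div_elem u h v * sum_splits r (\<lambda>a x b. scaleC ii (cov x k * mom b) (ev X (a @ s)))) =
      sum_splits r (\<lambda>a x b. cov x k * mom b * words.div_moment u h v (a @ s))"
    unfolding sum_splits_mult_left phi_sum_splits scaleC_mult_right phi_scaleC
    using u v s h r by (intro sum_splits_cong) (simp add: phi_div_elem_mult_ev valid_word_append)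
  moreover have "\<phi> (div_elem u h v * sum_splits s (\<lambda>a x b. scaleC ii (cov x k * mom a) (ev X (r @ b)))) =
      sum_splits s (\<lambda>a x b. cov x k * mom a * words.div_moment u h v (r @ b))"
    unfolding sum_splits_mult_left phi_sum_splits scaleC_mult_right phi_scaleC
    using u v r h s by (intro sum_splits_cong) (simp add: phi_div_elem_mult_ev valid_word_append valid_word_Cons)
  moreover have "\<phi> (div_elem u h v * ev X (r @ k # s)) = words.div_moment u h v (r @ k # s)"
    using u v r s h k by (simp add: phi_div_elem_mult_ev valid_word_append valid_word_Cons)
  ultimately have "\<phi> (div_elem u h v * div_elem r k s) = words.div_moment u h v (r @ k # s)
      - sum_splits r (\<lambda>a x b. cov x k * mom b * words.div_moment u h v (a @ s))
      - sum_splits s (\<lambda>a x b. cov x k * mom a * words.div_moment u h v (r @ b))"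
    unfolding expand right_diff_distrib phi_diff by simp
  also have "\<dots> = cov h k * mom (u @ s) * mom (v @ r)
     + sum_splits u (\<lambda>a x b. sum_splits r (\<lambda>a' y b'. cov x k * cov y h * mom (a @ s) * mom (b @ b') * mom (v @ a')))
     + sum_splits v (\<lambda>a x b. sum_splits s (\<lambda>a' y b'. cov x k * cov y h * mom (u @ b') * mom (a @ a') * mom (b @ r)))"
    using u v r s k by (intro words.div_moment_isometry) (auto simp: valid_word_def)
  finally show ?thesis .
qed

lemma st_div_elem:
  assumes u: "valid_word T u" and v: "valid_word T v" and k: "valid_step T k"
  shows "st (div_elem u k v) = div_elem (rev v) k (rev u)"
proof -
  have "st (ev X u * Xh X k * ev X v) = ev X (rev v) * Xh X k * ev X (rev u)"
    using u v k by (simp add: st_mult st_ev Xh_self_adjoint mult.assoc)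
  moreover have "st (sum_splits u (\<lambda>a x b. scaleC ii (cov x k * mom b) (ev X a * ev X v))) =
      sum_splits (rev u) (\<lambda>a x b. scaleC ii (cov x k * mom a) (ev X (rev v) * ev X b))"
    unfolding st_sum_splits sum_splits_rev
    by (rule sum_splits_cong)
      (use u v k in \<open>simp add: valid_word_append valid_word_Cons st_scaleC st_mult st_ev cnj_cov cnj_mom\<close>)
  moreover have "st (sum_splits v (\<lambda>a x b. scaleC ii (cov x k * mom a) (ev X u * ev X b))) =
      sum_splits (rev v) (\<lambda>a x b. scaleC ii (cov x k * mom b) (ev X a * ev X (rev u)))"
    unfolding st_sum_splits sum_splits_rev
    by (rule sum_splits_cong)
      (use u v k in \<open>simp add: valid_word_append valid_word_Cons st_scaleC st_mult st_ev cnj_cov cnj_mom\<close>)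
  ultimately show ?thesis
    unfolding div_elem_def st_diff by (simp add: diff_diff_eq add.commute)
qed

lemma phi_div_elem_mult_st_div_elem:
  assumes "valid_word T u" "valid_word T v" "valid_word T u'" "valid_word T v'"
    and "valid_step T h" "valid_step T k"
  shows "\<phi> (div_elem u h v * st (div_elem u' k v')) = cov h k * mom (u @ rev u') * mom (v @ rev v')
     + sum_splits u (\<lambda>a x b. sum_splits v' (\<lambda>a' y b'.
         cov x k * cov y h * mom (a @ rev u') * mom (b @ rev a') * mom (v @ rev b')))
     + sum_splits v (\<lambda>a x b. sum_splits u' (\<lambda>a' y b'.
         cov x k * cov y h * mom (u @ rev a') * mom (a @ rev b') * mom (b @ rev v')))"
  using assms
  by (simp add: st_div_elem phi_div_elem_mult_div_elem valid_word_rev sum_splits_rev)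

end

section \<open>The isometry for simple integrands\<close>

lemma sum_list_map_concat: "(\<Sum>x\<leftarrow>concat xss. f x) = (\<Sum>xs\<leftarrow>xss. \<Sum>x\<leftarrow>xs. f x)"
  by (induction xss) auto

lemma sum_list_map_cong: "(\<And>x. x \<in> set xs \<Longrightarrow> f x = g x) \<Longrightarrow> (\<Sum>x\<leftarrow>xs. f x) = (\<Sum>x\<leftarrow>xs. g x)"
  by (metis map_cong)

lemma DXw_conv_splits: "DXw w = map (\<lambda>(a, x, b). ([(1, a, b)], x)) (splits w)"
  by (simp add: DXw_def splits_conv_nth)

context nc_semicircular
begin

lemma pairH_D1:
  "pairH \<phi> X (D1 F) k = concat (map (\<lambda>(c, u, v). map (\<lambda>(a, x, b). (cov x k * c, a, b, v)) (splits u)) F)"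
  by (induction F) (auto simp: D1_def DXw_conv_splits pairH_def tscale_def cov_def split_def comp_def)

lemma pairH_D2:
  "pairH \<phi> X (D2 F) k = concat (map (\<lambda>(c, u, v). map (\<lambda>(a, x, b). (cov x k * c, u, a, b)) (splits v)) F)"
  by (induction F) (auto simp: D2_def DXw_conv_splits pairH_def tscale_def cov_def split_def comp_def)

lemma pairH_Estar3_D2:
  "pairH \<phi> X (Estar3 (D2 G)) h =
    concat (map (\<lambda>(d, u, v). map (\<lambda>(a, x, b). (cov x h * cnj d, rev u, rev a, rev b)) (splits v)) G)"
  by (induction G)
    (auto simp: D2_def DXw_conv_splits pairH_def tscale_def cov_def Estar3_def t3star_def split_def comp_def)

lemma pairH_Estar3_D1:
  "pairH \<phi> X (Estar3 (D1 G)) h =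
    concat (map (\<lambda>(d, u, v). map (\<lambda>(a, x, b). (cov x h * cnj d, rev a, rev b, rev v)) (splits u)) G)"
  by (induction G)
    (auto simp: D1_def DXw_conv_splits pairH_def tscale_def cov_def Estar3_def t3star_def split_def comp_def)

definition div_tensor :: "tensor2 \<Rightarrow> step \<Rightarrow> 'a" where
  "div_tensor F h = (\<Sum>(c, u, v)\<leftarrow>F. scaleC ii c (div_elem u h v))"

lemma deltaX_eq_sum_div_tensor: "deltaX ii \<phi> X U = (\<Sum>(F, h)\<leftarrow>U. div_tensor F h)"
proof -
  have "sharp ii X F (Xh X h) - idphiid ii \<phi> X (pairH \<phi> X (DX2 F) h) = div_tensor F h" for F h
  proof (induction F)
    case (Cons t F)
    obtain c u v where t: "t = (c, u, v)" by (cases t)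
    have D1: "idphiid ii \<phi> X (pairH \<phi> X (D1 [t]) h) =
        scaleC ii c (sum_splits u (\<lambda>a x b. scaleC ii (cov x h * mom b) (ev X a * ev X v)))"
      unfolding pairH_D1
      by (simp add: t idphiid_def sum_splits_def split_def comp_def scaleC_sum_list scaleC_scaleC mom_def mult_ac)
    have D2: "idphiid ii \<phi> X (pairH \<phi> X (D2 [t]) h) =
        scaleC ii c (sum_splits v (\<lambda>a x b. scaleC ii (cov x h * mom a) (ev X u * ev X b)))"
      unfolding pairH_D2
      by (simp add: t idphiid_def sum_splits_def split_def comp_def scaleC_sum_list scaleC_scaleC mom_def mult_ac)
    have "idphiid ii \<phi> X (pairH \<phi> X (DX2 (t # F)) h) = idphiid ii \<phi> X (pairH \<phi> X (D1 [t]) h)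
        + idphiid ii \<phi> X (pairH \<phi> X (D2 [t]) h) + idphiid ii \<phi> X (pairH \<phi> X (DX2 F) h)"
      by (simp add: DX2_def D1_def D2_def pairH_def idphiid_def)
    moreover have "sharp ii X (t # F) (Xh X h) = scaleC ii c (ev X u * Xh X h * ev X v) + sharp ii X F (Xh X h)"
      by (simp add: sharp_def t)
    ultimately show ?case
      using Cons.IH unfolding D1 D2
      by (simp add: div_tensor_def t div_elem_def scaleC_diff_right scaleC_add_right algebra_simps)
  qed (simp add: sharp_def DX2_def D1_def D2_def pairH_def idphiid_def div_tensor_def)
  then show ?thesis
    unfolding deltaX_def by (simp add: split_def)
qed

lemma phi2_t2mult:
  "phi2 \<phi> X (t2mult A B) = (\<Sum>(c, u1, u2)\<leftarrow>A. \<Sum>(d, v1, v2)\<leftarrow>B. c * d * (mom (u1 @ v1) * mom (u2 @ v2)))"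
  by (simp add: phi2_def t2mult_def sum_list_map_concat split_def comp_def mom_def mult_ac)

lemma phi3_t3mult:
  "phi3 \<phi> X (t3mult A B) = (\<Sum>(c, u1, u2, u3)\<leftarrow>A. \<Sum>(d, v1, v2, v3)\<leftarrow>B.
      c * d * (mom (u1 @ v1) * mom (u2 @ v2) * mom (u3 @ v3)))"
  by (simp add: phi3_def t3mult_def sum_list_map_concat split_def comp_def mom_def mult_ac)

lemma phi3_D1_D2:
  "phi3 \<phi> X (t3mult (pairH \<phi> X (D1 F) k) (pairH \<phi> X (Estar3 (D2 G)) h)) =
    (\<Sum>(c, u, v)\<leftarrow>F. \<Sum>(d, u', v')\<leftarrow>G. c * cnj d * sum_splits u (\<lambda>a x b. sum_splits v' (\<lambda>a' y b'.
       cov x k * cov y h * mom (a @ rev u') * mom (b @ rev a') * mom (v @ rev b'))))"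
proof -
  have "phi3 \<phi> X (t3mult (pairH \<phi> X (D1 F) k) (pairH \<phi> X (Estar3 (D2 G)) h)) =
      (\<Sum>(c, u, v)\<leftarrow>F. sum_splits u (\<lambda>a x b. \<Sum>(d, u', v')\<leftarrow>G. sum_splits v' (\<lambda>a' y b'.
        (cov x k * c) * (cov y h * cnj d) * (mom (a @ rev u') * mom (b @ rev a') * mom (v @ rev b')))))"
    unfolding pairH_D1 pairH_Estar3_D2 phi3_t3mult sum_list_map_concat
    by (simp add: sum_splits_def split_def comp_def)
  then show ?thesis
    by (simp add: sum_splits_sum_list_swap sum_splits_mult_left mult_ac split_def)
qed

lemma phi3_D2_D1:
  "phi3 \<phi> X (t3mult (pairH \<phi> X (D2 F) k) (pairH \<phi> X (Estar3 (D1 G)) h)) =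
    (\<Sum>(c, u, v)\<leftarrow>F. \<Sum>(d, u', v')\<leftarrow>G. c * cnj d * sum_splits v (\<lambda>a x b. sum_splits u' (\<lambda>a' y b'.
       cov x k * cov y h * mom (u @ rev a') * mom (a @ rev b') * mom (b @ rev v'))))"
proof -
  have "phi3 \<phi> X (t3mult (pairH \<phi> X (D2 F) k) (pairH \<phi> X (Estar3 (D1 G)) h)) =
      (\<Sum>(c, u, v)\<leftarrow>F. sum_splits v (\<lambda>a x b. \<Sum>(d, u', v')\<leftarrow>G. sum_splits u' (\<lambda>a' y b'.
        (cov x k * c) * (cov y h * cnj d) * (mom (u @ rev a') * mom (a @ rev b') * mom (b @ rev v')))))"
    unfolding pairH_D2 pairH_Estar3_D1 phi3_t3mult sum_list_map_concat
    by (simp add: sum_splits_def split_def comp_def)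
  then show ?thesis
    by (simp add: sum_splits_sum_list_swap sum_splits_mult_left mult_ac split_def)
qed

end

lemma phi2_concat: "phi2 \<phi> X (concat xss) = (\<Sum>xs\<leftarrow>xss. phi2 \<phi> X xs)"
  by (induction xss) (auto simp: phi2_def)

lemma phi2_tscale: "phi2 \<phi> X (tscale c A) = c * phi2 \<phi> X A"
  by (induction A) (auto simp: phi2_def tscale_def split_def distrib_left mult_ac)

lemma phi3_concat: "phi3 \<phi> X (concat xss) = (\<Sum>xs\<leftarrow>xss. phi3 \<phi> X xs)"
  by (induction xss) (auto simp: phi3_def)

lemma phi3_append: "phi3 \<phi> X (A @ B) = phi3 \<phi> X A + phi3 \<phi> X B"
  by (simp add: phi3_def)

context nc_semicircular
begin

lemma phi_div_tensor_mult_st: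
  "\<phi> (div_tensor F h * st (div_tensor G k)) =
    (\<Sum>(c, u, v)\<leftarrow>F. \<Sum>(d, u', v')\<leftarrow>G. c * cnj d * \<phi> (div_elem u h v * st (div_elem u' k v')))"
  unfolding div_tensor_def st_sum_list sum_list_mult_const[symmetric] sum_list_const_mult[symmetric] phi_sum_list
  by (simp add: split_def st_scaleC scaleC_mult_left scaleC_mult_right scaleC_scaleC phi_scaleC mult_ac)
    (rule sum_list_swap)

lemma phi_div_tensor_mult_st_div_tensor:
  assumes F: "\<forall>(c, u, v)\<in>set F. valid_word T u \<and> valid_word T v" and h: "valid_step T h"
    and G: "\<forall>(c, u, v)\<in>set G. valid_word T u \<and> valid_word T v" and k: "valid_step T k"
  shows "\<phi> (div_tensor F h * st (div_tensor G k)) = cov h k * phi2 \<phi> X (t2mult F (t2star G))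
     + (phi3 \<phi> X (t3mult (pairH \<phi> X (D1 F) k) (pairH \<phi> X (Estar3 (D2 G)) h))
      + phi3 \<phi> X (t3mult (pairH \<phi> X (D2 F) k) (pairH \<phi> X (Estar3 (D1 G)) h)))"
proof -
  have "\<phi> (div_tensor F h * st (div_tensor G k)) = (\<Sum>(c, u, v)\<leftarrow>F. \<Sum>(d, u', v')\<leftarrow>G. c * cnj d *
      (cov h k * mom (u @ rev u') * mom (v @ rev v')
     + sum_splits u (\<lambda>a x b. sum_splits v' (\<lambda>a' y b'.
         cov x k * cov y h * mom (a @ rev u') * mom (b @ rev a') * mom (v @ rev b')))
     + sum_splits v (\<lambda>a x b. sum_splits u' (\<lambda>a' y b'.
         cov x k * cov y h * mom (u @ rev a') * mom (a @ rev b') * mom (b @ rev v')))))"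
    unfolding phi_div_tensor_mult_st
    using F G h k
    by (fastforce intro!: sum_list_map_cong simp: phi_div_elem_mult_st_div_elem split: prod.splits)
  then show ?thesis
    unfolding phi3_D1_D2 phi3_D2_D1 phi2_t2mult
    by (simp add: t2star_def split_def comp_def distrib_left sum_list_addf sum_list_const_mult[symmetric]
        mult_ac)
qed

theorem deltaX_isometry:
  assumes U: "valid_E2 T U" and V: "valid_E2 T V"
  shows "\<phi> (deltaX ii \<phi> X U * st (deltaX ii \<phi> X V)) =
    phi2 \<phi> X (pairHH \<phi> X U (Estar2 V)) + phi3 \<phi> X (TH \<phi> X U V)"
proof -
  have "\<phi> (deltaX ii \<phi> X U * st (deltaX ii \<phi> X V)) =
      (\<Sum>(F, h)\<leftarrow>U. \<Sum>(G, k)\<leftarrow>V. \<phi> (div_tensor F h * st (div_tensor G k)))"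
    unfolding deltaX_eq_sum_div_tensor st_sum_list sum_list_mult_const[symmetric] sum_list_const_mult[symmetric] phi_sum_list
    by (simp add: split_def) (rule sum_list_swap)
  also have "\<dots> = (\<Sum>(F, h)\<leftarrow>U. \<Sum>(G, k)\<leftarrow>V. cov h k * phi2 \<phi> X (t2mult F (t2star G))
     + (phi3 \<phi> X (t3mult (pairH \<phi> X (D1 F) k) (pairH \<phi> X (Estar3 (D2 G)) h))
      + phi3 \<phi> X (t3mult (pairH \<phi> X (D2 F) k) (pairH \<phi> X (Estar3 (D1 G)) h))))"
    using U V unfolding valid_E2_def
    by (fastforce intro!: sum_list_map_cong simp: phi_div_tensor_mult_st_div_tensor split: prod.splits)
  also have "\<dots> = phi2 \<phi> X (pairHH \<phi> X U (Estar2 V)) + phi3 \<phi> X (TH \<phi> X U V)"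
    by (simp add: pairHH_def TH_def phi2_concat phi3_concat phi3_append phi2_tscale Estar2_def split_def
        comp_def cov_def sum_list_addf)
  finally show ?thesis .
qed

end

theorem mainTheorem3:
  fixes ii :: "'a::{real_normed_algebra_1,banach}"
    and st :: "'a \<Rightarrow> 'a" and \<phi> :: "'a \<Rightarrow> complex"
    and X :: "real \<Rightarrow> 'a" and T :: real
    and U V :: "(tensor2 \<times> step) list"
  assumes "T > 0"
    and "nc_prob_space ii st \<phi>"
    and "semicircular_process T st \<phi> X"
    and "valid_E2 T U" and "valid_E2 T V"
  shows "\<phi> (deltaX ii \<phi> X U * st (deltaX ii \<phi> X V)) =
           phi2 \<phi> X (pairHH \<phi> X U (Estar2 V)) + phi3 \<phi> X (TH \<phi> X U V)"
proof -
  interpret nc_semicircular ii st \<phi> X T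
    using assms(2,3) by unfold_locales
  show ?thesis
    using assms(4,5) by (rule deltaX_isometry)
qed

end
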